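(* Let $G$ be a finite group with $|G| = 30p$, where $p$ is a prime with $p \ge 7$. Then: (1) the commutator subgroup $G'$ is cyclic; (2) $G' \cap Z(G) = \{e\}$; (3) $G \cong \mathbb{Z}_n \ltimes G'$ for some positive integer $n$; and (4) if $b$ is a generator of the factor $\mathbb{Z}_n$ in (3), and $\tau \in \mathbb{Z}$ is chosen such that $x^b = x^\tau$ for all $x \in G'$, then $\gcd(\tau - 1, |G'|) = 1$.
   Context: $G' = [G,G]$ is the commutator subgroup, $Z(G)$ the center, and $x^b = b^{-1} x b$ denotes conjugation. *)

theory Defs
  imports "HOL-Algebra.Algebra"
begin

definition group_center :: "('a, 'b) monoid_scheme \<Rightarrow> 'a set" where
  "group_center G = {z \<in> carrier G. \<forall>g \<in> carrier G. z \<otimes>\<^bsub>G\<^esub> g = g \<otimes>\<^bsub>G\<^esub> z}"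

text \<open>Internal semidirect product with cyclic complement: b generates a cyclic
  subgroup (isomorphic to Z_n, n = ord b) which is a complement of the normal
  subgroup N, i.e. G = <b> N and <b> \<inter> N = 1. Then G is isomorphic to
  Z_n \<ltimes> N, with Z_n acting on N by conjugation by b.\<close>
definition cyclic_complement_gen :: "('a, 'b) monoid_scheme \<Rightarrow> 'a set \<Rightarrow> 'a \<Rightarrow> bool" where
  "cyclic_complement_gen G N b \<longleftrightarrow>
     b \<in> carrier G \<and>
     generate G {b} \<inter> N = {\<one>\<^bsub>G\<^esub>} \<and>
     generate G {b} <#>\<^bsub>G\<^esub> N = carrier G"

end

(*
  Since |G| = 30 p is squarefree, every Sylow subgroup of G has prime order, and Sylow counting
  combined with a normalizer argument shows that the Sylow p-subgroup P is normal.  Conjugation acts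
  on the cyclic group P by power maps, which commute with each other, so G' centralizes P; and G/P,
  a group of order 30, has its derived subgroup inside a cyclic subgroup of order 15.  Together these
  make G' abelian, hence cyclic (its order is squarefree).  The abelian quotient G/G' is cyclic of
  order coprime to |G'|, which yields a cyclic complement <b>.  If b acts on G' by x |-> x^tau, then
  G is abelian modulo K = {x^(tau-1). x in G'}, so G' <= K: raising to the power tau-1 is onto G',
  i.e. gcd(tau-1, |G'|) = 1.  In particular b fixes no nontrivial element of G', so G' meets the
  centre trivially.
*)

theory Submission
  imports Defs "HOL-Computational_Algebra.Squarefree"
begin

(* Multiset also uses the ASCII notation <# (strict submultiset), clashing with left cosets. *)
no_notation (ASCII) subset_mset (infix \<open><#\<close> 50)

lemma prime_nat_dvdD: "Factorial_Ring.prime (p::nat) \<Longrightarrow> d dvd p \<Longrightarrow> d = 1 \<or> d = p"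
  by (simp add: prime_nat_iff)

lemma squarefree_imp_not_prime_square_dvd:
  "squarefree (n::nat) \<Longrightarrow> Factorial_Ring.prime q \<Longrightarrow> \<not> q^2 dvd n"
  using squarefreeD not_prime_1 by (metis nat_dvd_1_iff_1)

lemma squarefree_mult_imp_coprime:
  assumes "squarefree (a * b :: nat)"
  shows "coprime a b"
proof (rule ccontr)
  assume "\<not> coprime a b"
  then obtain q where q: "Factorial_Ring.prime q" "q dvd a" "q dvd b"
    using prime_factor_nat[of "gcd a b"] by (auto simp: coprime_iff_gcd_eq_1)
  then have "q^2 dvd a * b" by (simp add: power2_eq_square mult_dvd_mono)
  then show False using squarefree_imp_not_prime_square_dvd[OF assms q(1)] by simp
qed

lemma mem_divisors_nat: "(d::nat) dvd n \<Longrightarrow> 0 < n \<Longrightarrow> d \<in> {e \<in> {1..n}. e dvd n}"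
  using dvd_pos_nat dvd_imp_le by fastforce

lemma squarefree_30: "squarefree (30::nat)"
proof -
  have "squarefree (2 * 3 * 5 :: nat)"
    by (intro squarefree_mult_coprime squarefree_prime) code_simp+
  then show ?thesis by simp
qed

lemma squarefree_30_mult_prime:
  fixes p :: nat
  assumes p: "Factorial_Ring.prime p" "7 \<le> p"
  shows "squarefree (30 * p)"
proof (rule squarefree_mult_coprime[OF _ squarefree_30])
  show "squarefree p" using squarefree_prime[OF p(1)] .
  have small: "\<not> p dvd n" if "0 < n" "n < 7" for n :: nat
    using that p(2) dvd_imp_le[of p n] by linarith
  have "\<not> p dvd 2 * 3 * 5"
    unfolding prime_dvd_mult_iff[OF p(1)] using small[of 2] small[of 3] small[of 5] by simp
  then have "coprime p 30" using prime_imp_coprime[OF p(1)] by simp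
  then show "coprime 30 p" by (simp add: coprime_commute)
qed

lemma dvd_30_mod_prime_eq_1_cases:
  fixes d p :: nat
  assumes d: "d dvd 30" "d mod p = 1" and p: "Factorial_Ring.prime p" "7 \<le> p"
  shows "d = 1 \<or> (p = 7 \<and> d = 15) \<or> (p = 29 \<and> d = 30)"
proof (cases "d < p")
  case True
  then show ?thesis using d(2) by simp
next
  case False
  have "d \<in> {e \<in> {1..30}. e dvd 30}" using mem_divisors_nat d(1) by simp
  also have "\<dots> = {1, 2, 3, 5, 6, 10, 15, 30}" by code_simp
  finally have "d \<in> {10, 15, 30}" using False p(2) by auto
  then have "(d, p) \<in> {(d, p) \<in> {10, 15, 30} \<times> {7..30}. d mod p = 1}"
    using False p(2) d(2) by auto
  also have "\<dots> = {(10, 9), (15, 7), (15, 14), (30, 29)}" by code_simp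
  finally have "(d, p) \<in> {(10, 9), (15, 7), (15, 14), (30, 29)}" .
  moreover have "\<not> Factorial_Ring.prime (9::nat)" "\<not> Factorial_Ring.prime (14::nat)" by code_simp+
  ultimately show ?thesis using p(1) by auto
qed

locale finite_group = group +
  assumes finite_carrier [simp]: "finite (carrier G)"

context finite_group
begin

lemma finite_subgroup: "subgroup H G \<Longrightarrow> finite H"
  using finite_carrier finite_subset subgroup.subset by blast

lemma finite_group_subgroup: "subgroup H G \<Longrightarrow> finite_group (G\<lparr>carrier := H\<rparr>)"
  by (simp add: finite_group_axioms_def finite_group_def finite_subgroup subgroup_imp_group)

lemma card_subgroup_dvd_order: "subgroup H G \<Longrightarrow> card H dvd order G"
  by (metis dvd_triv_right lagrange)

lemma card_subgroup_dvd_card: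
  assumes "subgroup H G" "subgroup K G" "K \<subseteq> H"
  shows "card K dvd card H"
proof -
  interpret H: finite_group "G\<lparr>carrier := H\<rparr>" using finite_group_subgroup assms(1) .
  have "subgroup K (G\<lparr>carrier := H\<rparr>)" using assms subgroup_incl by blast
  then show ?thesis using H.card_subgroup_dvd_order by (simp add: order_def)
qed

lemma ord_dvd_card_subgroup:
  assumes "subgroup H G" "x \<in> H"
  shows "ord x dvd card H"
proof -
  have x: "x \<in> carrier G" using assms subgroup.subset by blast
  have "generate G {x} \<subseteq> H" using assms generate_subgroup_incl by blast
  then show ?thesis
    using card_subgroup_dvd_card[OF assms(1) generate_is_subgroup] x generate_pow_card[OF x] by auto
qed

lemma ord_eq_card_prime_order_subgroup:
  assumes "subgroup H G" "Factorial_Ring.prime (card H)" "x \<in> H" "x \<noteq> \<one>"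
  shows "ord x = card H"
proof -
  have "x \<in> carrier G" using assms subgroup.subset by blast
  then have "ord x \<noteq> 1" using ord_eq_1 assms by blast
  then show ?thesis using ord_dvd_card_subgroup assms prime_nat_dvdD by blast
qed

lemma generate_eq_prime_order_subgroup:
  assumes "subgroup H G" "Factorial_Ring.prime (card H)" "x \<in> H" "x \<noteq> \<one>"
  shows "generate G {x} = H"
proof -
  have x: "x \<in> carrier G" using assms subgroup.subset by blast
  have "generate G {x} \<subseteq> H" using assms generate_subgroup_incl by blast
  then show ?thesis
    using card_subset_eq[OF finite_subgroup[OF assms(1)]] generate_pow_card[OF x]
      ord_eq_card_prime_order_subgroup[OF assms] by simp
qed

lemma prime_order_subgroup_nontrivial:
  assumes "subgroup H G" "Factorial_Ring.prime (card H)"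
  obtains x where "x \<in> H" "x \<noteq> \<one>"
proof -
  have "card H \<noteq> 1" using assms(2) by (metis not_prime_1)
  then have "H \<noteq> {\<one>}" by auto
  then show ?thesis using that subgroup.one_closed[OF assms(1)] by blast
qed

lemma prime_order_subgroup_Int:
  assumes "subgroup H G" "Factorial_Ring.prime (card H)" "subgroup K G" "\<not> H \<subseteq> K"
  shows "H \<inter> K = {\<one>}"
proof -
  have HK: "subgroup (H \<inter> K) G" using assms subgroups_Inter_pair by blast
  then have "card (H \<inter> K) = 1 \<or> card (H \<inter> K) = card H"
    using card_subgroup_dvd_card[OF assms(1) HK] assms(2) prime_nat_dvdD by blast
  moreover have "card (H \<inter> K) \<noteq> card H"
    using card_subset_eq[OF finite_subgroup[OF assms(1)], of "H \<inter> K"] assms(4) by blast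
  ultimately have "card (H \<inter> K) = 1" by blast
  moreover have "\<one> \<in> H \<inter> K" using HK subgroup.one_closed by blast
  ultimately show ?thesis by (metis card_1_singletonE singleton_iff)
qed

lemma prime_order_subgroups_Int:
  assumes "subgroup H G" "subgroup K G" "Factorial_Ring.prime (card H)" "Factorial_Ring.prime (card K)"
    and "H \<noteq> K"
  shows "H \<inter> K = {\<one>}"
proof (rule prime_order_subgroup_Int[OF assms(1,3,2)])
  show "\<not> H \<subseteq> K"
  proof
    assume HK: "H \<subseteq> K"
    have "card H = 1 \<or> card H = card K"
      using prime_nat_dvdD[OF assms(4) card_subgroup_dvd_card[OF assms(2,1) HK]] .
    then have "card H = card K" using assms(3) by auto
    then show False using card_subset_eq[OF finite_subgroup[OF assms(2)] HK] assms(5) by simp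
  qed
qed

lemma exists_subgroup_of_prime_order:
  assumes "Factorial_Ring.prime q" "q dvd order G"
  obtains Q where "subgroup Q G" "card Q = q"
proof -
  obtain m where "order G = q * m" using assms by blast
  then have "sylow G q 1 m"
    unfolding sylow_eq using assms by (simp add: sylow_axioms_def is_group)
  then show ?thesis using sylow.sylow_thm that by fastforce
qed

lemma exists_subgroup_of_prime_order_in:
  assumes "subgroup S G" "Factorial_Ring.prime q" "q dvd card S"
  obtains R where "subgroup R G" "R \<subseteq> S" "card R = q"
proof -
  interpret S: finite_group "G\<lparr>carrier := S\<rparr>" using finite_group_subgroup assms(1) .
  obtain R where "subgroup R (G\<lparr>carrier := S\<rparr>)" "card R = q"
    using S.exists_subgroup_of_prime_order assms by (auto simp: order_def)
  then show ?thesis using that incl_subgroup[OF assms(1)] subgroup.subset by fastforce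
qed

end

definition centralizer :: "('a, 'b) monoid_scheme \<Rightarrow> 'a set \<Rightarrow> 'a set" where
  "centralizer G S = {x \<in> carrier G. \<forall>y \<in> S. x \<otimes>\<^bsub>G\<^esub> y = y \<otimes>\<^bsub>G\<^esub> x}"

lemma group_center_eq_centralizer: "group_center G = centralizer G (carrier G)"
  unfolding group_center_def centralizer_def ..

context group
begin

lemma mult_inv_cancel [simp]: "x \<in> carrier G \<Longrightarrow> y \<in> carrier G \<Longrightarrow> x \<otimes> (inv x \<otimes> y) = y"
  by (simp flip: m_assoc)

lemma inv_mult_cancel [simp]: "x \<in> carrier G \<Longrightarrow> y \<in> carrier G \<Longrightarrow> inv x \<otimes> (x \<otimes> y) = y"
  by (simp flip: m_assoc)

lemma centralizer_commute: "x \<in> centralizer G S \<Longrightarrow> y \<in> S \<Longrightarrow> x \<otimes> y = y \<otimes> x"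
  unfolding centralizer_def by blast

lemma centralizer_antimono: "A \<subseteq> B \<Longrightarrow> centralizer G B \<subseteq> centralizer G A"
  unfolding centralizer_def by blast

lemma subgroup_centralizer:
  assumes "S \<subseteq> carrier G"
  shows "subgroup (centralizer G S) G"
proof (rule subgroupI)
  show "centralizer G S \<subseteq> carrier G" unfolding centralizer_def by blast
  have "\<one> \<in> centralizer G S" using assms unfolding centralizer_def by auto
  then show "centralizer G S \<noteq> {}" by blast
next
  fix x assume x: "x \<in> centralizer G S"
  have xc: "x \<in> carrier G" using x unfolding centralizer_def by blast
  have "inv x \<otimes> y = y \<otimes> inv x" if y: "y \<in> S" for y
  proof -
    have yc: "y \<in> carrier G" using y assms by blast
    have "inv x \<otimes> (x \<otimes> y) \<otimes> inv x = inv x \<otimes> (y \<otimes> x) \<otimes> inv x"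
      using centralizer_commute[OF x y] by simp
    then show ?thesis using xc yc by (simp add: m_assoc)
  qed
  then show "inv x \<in> centralizer G S" using xc unfolding centralizer_def by simp
next
  fix x z assume x: "x \<in> centralizer G S" and z: "z \<in> centralizer G S"
  have c: "x \<in> carrier G" "z \<in> carrier G" using x z unfolding centralizer_def by auto
  have "x \<otimes> z \<otimes> y = y \<otimes> (x \<otimes> z)" if y: "y \<in> S" for y
  proof -
    have yc: "y \<in> carrier G" using y assms by blast
    have "x \<otimes> z \<otimes> y = x \<otimes> (y \<otimes> z)" using c yc centralizer_commute[OF z y] by (simp add: m_assoc)
    also have "\<dots> = y \<otimes> (x \<otimes> z)"
      using c yc centralizer_commute[OF x y] by (simp flip: m_assoc)
    finally show ?thesis .
  qed
  then show "x \<otimes> z \<in> centralizer G S" using c unfolding centralizer_def by simp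
qed

lemma subset_centralizer_sym:
  assumes "A \<subseteq> carrier G" "B \<subseteq> carrier G" "A \<subseteq> centralizer G B"
  shows "B \<subseteq> centralizer G A"
proof
  fix y assume y: "y \<in> B"
  have "y \<otimes> x = x \<otimes> y" if "x \<in> A" for x using assms(3) that y centralizer_commute by (metis subsetD)
  then show "y \<in> centralizer G A" using y assms(2) unfolding centralizer_def by blast
qed

lemma generate_subset_centralizer:
  assumes S: "S \<subseteq> carrier G" "S \<subseteq> centralizer G S"
  shows "generate G S \<subseteq> centralizer G (generate G S)"
proof -
  have "generate G S \<subseteq> centralizer G S"
    using generate_subgroup_incl[OF S(2) subgroup_centralizer[OF S(1)]] .
  then have "S \<subseteq> centralizer G (generate G S)"
    by (rule subset_centralizer_sym[OF generate_incl[OF S(1)] S(1)])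
  then show ?thesis
    by (rule generate_subgroup_incl[OF _ subgroup_centralizer[OF generate_incl[OF S(1)]]])
qed

lemma generate_singleton_subset_centralizer:
  "a \<in> carrier G \<Longrightarrow> generate G {a} \<subseteq> centralizer G (generate G {a})"
  by (rule generate_subset_centralizer) (auto simp: centralizer_def)

lemma set_mult_subset_centralizer:
  assumes "A \<subseteq> centralizer G A" "B \<subseteq> centralizer G B" "A \<subseteq> centralizer G B"
  shows "A <#> B \<subseteq> centralizer G (A <#> B)"
proof
  have A: "A \<subseteq> carrier G" and B: "B \<subseteq> carrier G" using assms unfolding centralizer_def by auto
  fix u assume "u \<in> A <#> B"
  then obtain a b where ab: "a \<in> A" "b \<in> B" "u = a \<otimes> b" unfolding set_mult_def by blast
  have "u \<otimes> v = v \<otimes> u" if "v \<in> A <#> B" for v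
  proof -
    obtain a' b' where ab': "a' \<in> A" "b' \<in> B" "v = a' \<otimes> b'"
      using \<open>v \<in> A <#> B\<close> unfolding set_mult_def by blast
    have c: "a \<in> carrier G" "b \<in> carrier G" "a' \<in> carrier G" "b' \<in> carrier G"
      using ab ab' A B by auto
    have com: "b \<otimes> a' = a' \<otimes> b" "a \<otimes> b' = b' \<otimes> a" "a \<otimes> a' = a' \<otimes> a" "b \<otimes> b' = b' \<otimes> b"
      using assms ab ab' centralizer_commute by (metis subsetD)+
    have "u \<otimes> v = a \<otimes> (b \<otimes> a') \<otimes> b'" using ab ab' c by (simp add: m_assoc)
    also have "\<dots> = (a \<otimes> a') \<otimes> (b \<otimes> b')" using c com(1) by (simp add: m_assoc)
    also have "\<dots> = a' \<otimes> (a \<otimes> b') \<otimes> b" using c com(3,4) by (simp add: m_assoc)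
    also have "\<dots> = v \<otimes> u" using ab ab' c com(2) by (simp add: m_assoc)
    finally show ?thesis .
  qed
  moreover have "u \<in> carrier G" using ab A B by auto
  ultimately show "u \<in> centralizer G (A <#> B)" unfolding centralizer_def by blast
qed

lemma subgroup_set_mult:
  assumes "subgroup H G" "subgroup K G" and norm: "\<And>h k. h \<in> H \<Longrightarrow> k \<in> K \<Longrightarrow> h \<otimes> k \<otimes> inv h \<in> K"
  shows "subgroup (H <#> K) G"
proof (rule subgroupI)
  interpret H: subgroup H G by fact
  interpret K: subgroup K G by fact
  show "H <#> K \<subseteq> carrier G" unfolding set_mult_def by auto
  show "H <#> K \<noteq> {}" unfolding set_mult_def using H.one_closed K.one_closed by blast
  fix a assume "a \<in> H <#> K"
  then obtain h k where hk: "h \<in> H" "k \<in> K" "a = h \<otimes> k" unfolding set_mult_def by auto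
  have "inv a = inv h \<otimes> (h \<otimes> inv k \<otimes> inv h)"
    using hk by (simp add: inv_mult_group m_assoc[symmetric])
  moreover have "h \<otimes> inv k \<otimes> inv h \<in> K" using norm hk by auto
  ultimately show "inv a \<in> H <#> K" using hk unfolding set_mult_def by auto
next
  interpret H: subgroup H G by fact
  interpret K: subgroup K G by fact
  fix a b assume "a \<in> H <#> K" "b \<in> H <#> K"
  then obtain h k h' k' where hk: "h \<in> H" "k \<in> K" "a = h \<otimes> k" "h' \<in> H" "k' \<in> K" "b = h' \<otimes> k'"
    unfolding set_mult_def by auto
  have "a \<otimes> b = (h \<otimes> h') \<otimes> ((inv h' \<otimes> k \<otimes> inv (inv h')) \<otimes> k')"
    using hk by (simp add: m_assoc)
  moreover have "inv h' \<otimes> k \<otimes> inv (inv h') \<in> K" using norm hk H.m_inv_closed by blast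
  ultimately show "a \<otimes> b \<in> H <#> K" using hk unfolding set_mult_def by auto
qed

lemma card_set_mult:
  assumes "subgroup H G" "subgroup K G" "H \<inter> K = {\<one>}"
  shows "card (H <#> K) = card H * card K"
proof -
  interpret H: subgroup H G by fact
  interpret K: subgroup K G by fact
  have "inj_on (\<lambda>(h, k). h \<otimes> k) (H \<times> K)"
  proof (rule inj_onI, clarify)
    fix h k h' k' assume hk: "h \<in> H" "k \<in> K" "h' \<in> H" "k' \<in> K" "h \<otimes> k = h' \<otimes> k'"
    have c: "h \<in> carrier G" "k \<in> carrier G" "h' \<in> carrier G" "k' \<in> carrier G" using hk by auto
    have "inv h' \<otimes> h = inv h' \<otimes> (h \<otimes> k \<otimes> inv k)" using c by (simp add: m_assoc)
    also have "\<dots> = k' \<otimes> inv k" using c hk(5) by (simp add: m_assoc)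
    finally have "inv h' \<otimes> h = k' \<otimes> inv k" .
    moreover have "inv h' \<otimes> h \<in> H" "k' \<otimes> inv k \<in> K" using hk by auto
    ultimately have "inv h' \<otimes> h = \<one>" using assms(3) by auto
    then have "h = h'" using inv_solve_left'[of \<one> h' h] c by simp
    then show "h = h' \<and> k = k'" using hk by auto
  qed
  moreover have "H <#> K = (\<lambda>(h, k). h \<otimes> k) ` (H \<times> K)" unfolding set_mult_def by auto
  ultimately show ?thesis by (simp add: card_image card_cartesian_product)
qed

lemma commute_if_mutually_normalizing:
  assumes "subgroup R G" "subgroup T G" "R \<inter> T = {\<one>}" "x \<in> R" "y \<in> T"
    and "x \<otimes> y \<otimes> inv x \<in> T" "y \<otimes> inv x \<otimes> inv y \<in> R"
  shows "x \<otimes> y = y \<otimes> x"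
proof -
  interpret R: subgroup R G by fact
  interpret T: subgroup T G by fact
  have c: "x \<in> carrier G" "y \<in> carrier G" using assms by auto
  let ?c = "x \<otimes> y \<otimes> inv x \<otimes> inv y"
  have "?c \<in> T" using assms by simp
  moreover have "?c = x \<otimes> (y \<otimes> inv x \<otimes> inv y)" using c by (simp add: m_assoc)
  then have "?c \<in> R" using assms by simp
  ultimately have "?c = \<one>" using assms(3) by blast
  then show ?thesis using c by (metis inv_closed inv_mult_group inv_solve_right' l_one m_closed)
qed

lemma conjugate_eq_image: "g <# H #> inv g = (\<lambda>h. g \<otimes> h \<otimes> inv g) ` H"
  unfolding l_coset_def r_coset_def by auto

lemma card_conjugate:
  assumes "g \<in> carrier G" "H \<subseteq> carrier G"
  shows "card (g <# H #> inv g) = card H"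
proof -
  have "inj_on (\<lambda>h. g \<otimes> h \<otimes> inv g) H"
    using conjugation_is_inj assms by (meson inj_onI subsetD)
  then show ?thesis using conjugate_eq_image card_image by metis
qed

lemma conjugate_conjugate:
  assumes "g \<in> carrier G" "h \<in> carrier G" "Q \<subseteq> carrier G"
  shows "g <# (h <# Q #> inv h) #> inv g = (g \<otimes> h) <# Q #> inv (g \<otimes> h)"
  using assms unfolding conjugate_eq_image image_image
  by (intro image_cong) (auto simp: m_assoc inv_mult_group subset_iff)

lemma conjugate_one: "Q \<subseteq> carrier G \<Longrightarrow> \<one> <# Q #> inv \<one> = Q"
  unfolding conjugate_eq_image by (auto simp: subset_iff)

lemma conjugate_int_pow:
  assumes "g \<in> carrier G" "x \<in> carrier G"
  shows "g \<otimes> x [^] (k::int) \<otimes> inv g = (g \<otimes> x \<otimes> inv g) [^] k"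
proof -
  have "group_hom G G (\<lambda>x. g \<otimes> x \<otimes> inv g)"
    using assms(1) by unfold_locales (auto intro!: homI simp: m_assoc)
  then show ?thesis using group_hom.hom_int_pow assms(2) by fastforce
qed

lemma mem_normalizer_iff:
  assumes "H \<subseteq> carrier G"
  shows "g \<in> normalizer G H \<longleftrightarrow> g \<in> carrier G \<and> g <# H #> inv g = H"
  using assms unfolding normalizer_def stabilizer_def by auto

lemma normalizer_conj_closed:
  assumes "H \<subseteq> carrier G" "g \<in> normalizer G H" "h \<in> H"
  shows "g \<otimes> h \<otimes> inv g \<in> H"
proof -
  have "g <# H #> inv g = H" using mem_normalizer_iff assms(1,2) by blast
  then show ?thesis using conjugate_eq_image[of g H] assms(3) by blast
qed

lemma ord_mult_coprime:
  assumes x: "x \<in> carrier G" and y: "y \<in> carrier G" and commute: "x \<otimes> y = y \<otimes> x"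
    and coprime: "coprime (ord x) (ord y)"
  shows "ord (x \<otimes> y) = ord x * ord y"
proof -
  let ?n = "ord (x \<otimes> y)"
  have "(x \<otimes> y) [^] ?n = \<one>" using x y by simp
  then have "x [^] ?n \<otimes> y [^] ?n = \<one>" using pow_mult_distrib[OF commute x y] by simp
  then have z: "x [^] ?n = inv (y [^] ?n)" using inv_equality x y by simp
  have "(x [^] ?n) [^] ord x = \<one>" using x by (metis mult.commute nat_pow_one nat_pow_pow pow_ord_eq_1)
  then have dvd_x: "ord (x [^] ?n) dvd ord x" using pow_eq_id x by simp
  have "(y [^] ?n) [^] ord y = \<one>" using y by (metis mult.commute nat_pow_one nat_pow_pow pow_ord_eq_1)
  then have "(x [^] ?n) [^] ord y = \<one>" using z y by (simp add: nat_pow_inv)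
  then have dvd_y: "ord (x [^] ?n) dvd ord y" using pow_eq_id x by simp
  have "ord (x [^] ?n) = 1" using dvd_x dvd_y coprime by (meson coprime_common_divisor_nat coprime_def)
  then have x1: "x [^] ?n = \<one>" using ord_eq_1 x by simp
  then have "y [^] ?n = \<one>" using z y by (metis inv_inv inv_one nat_pow_closed)
  then have "ord x * ord y dvd ?n" using x1 pow_eq_id x y coprime by (simp add: divides_mult)
  then show ?thesis using ord_mul_divides[OF commute x y] by (simp add: dvd_antisym)
qed

lemma cyclic_subgroup_generator:
  assumes H: "subgroup H G" and cyclic: "cyclic_group (G\<lparr>carrier := H\<rparr>)"
  obtains a where "a \<in> H" "generate G {a} = H"
proof -
  interpret H: group "G\<lparr>carrier := H\<rparr>" using subgroup_imp_group[OF H] .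
  obtain a where a: "a \<in> H" "H = range (\<lambda>n::int. a [^]\<^bsub>G\<lparr>carrier := H\<rparr>\<^esub> n)"
    using H.cyclic_group cyclic by auto
  then have "H = range (\<lambda>n::int. a [^] n)" using int_pow_consistent[OF H a(1)] by simp
  then have "generate G {a} = H" using generate_pow subgroup.mem_carrier[OF H a(1)] by auto
  then show ?thesis using that a(1) by blast
qed

end

context finite_group
begin

lemma mem_normalizerI:
  assumes "H \<subseteq> carrier G" "g \<in> carrier G" "\<And>h. h \<in> H \<Longrightarrow> g \<otimes> h \<otimes> inv g \<in> H"
  shows "g \<in> normalizer G H"
proof -
  have "g <# H #> inv g \<subseteq> H" using assms conjugate_eq_image by auto
  moreover have "finite H" using assms(1) finite_carrier finite_subset by blast
  ultimately have "g <# H #> inv g = H" using card_conjugate[OF assms(2,1)] by (simp add: card_subset_eq)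
  then show ?thesis using mem_normalizer_iff assms by blast
qed

lemma subgroup_subset_normalizer:
  assumes "subgroup H G"
  shows "H \<subseteq> normalizer G H"
proof
  interpret subgroup H G by fact
  fix g assume "g \<in> H"
  then show "g \<in> normalizer G H" by (intro mem_normalizerI) auto
qed

lemma normal_iff_normalizer_eq:
  assumes "subgroup H G"
  shows "H \<lhd> G \<longleftrightarrow> normalizer G H = carrier G"
  using assms normal_inv_iff mem_normalizerI normalizer_conj_closed subgroup.subset
    normalizer_imp_subgroup[OF subgroup.subset[OF assms]]
  by (metis subgroup.mem_carrier subsetI subset_antisym)

lemma coset_eq_compl_if_index_two:
  assumes M: "subgroup M G" and index: "order G = 2 * card M" and x: "x \<in> carrier G" "x \<notin> M"
  shows "M #> x = carrier G - M" and "x <# M = carrier G - M"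
proof -
  interpret M: subgroup M G by fact
  have compl: "card (carrier G - M) = card M"
    using index M.subset by (simp add: order_def card_Diff_subset finite_subgroup[OF M])
  have "(M #> x) \<inter> M = {}"
    using x repr_independence[OF _ x(1) M] coset_join1[OF _ x(1) M] coset_join2[OF _ M]
    by (metis disjoint_iff M.mem_carrier)
  then have "M #> x \<subseteq> carrier G - M" using r_coset_subset_G[OF M.subset x(1)] by blast
  moreover have "card (M #> x) = card M"
    using card_rcosets_equal[of "M #> x" M] rcosetsI[OF M.subset x(1)] M.subset by simp
  ultimately show "M #> x = carrier G - M"
    using compl by (metis card_subset_eq finite_Diff finite_carrier)
  have "(x <# M) \<inter> M = {}"
    using x l_repr_independence[OF _ x(1) M] coset_join3[OF _ M] lcos_self[OF x(1) M]
    by (metis disjoint_iff M.mem_carrier)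
  then have "x <# M \<subseteq> carrier G - M" using l_coset_subset_G[OF M.subset x(1)] by blast
  moreover have "card (x <# M) = card M"
    using l_card_cosets_equal[of "x <# M" M] x M.subset unfolding LCOSETS_def
    by (metis UN_iff finite_carrier singletonI)
  ultimately show "x <# M = carrier G - M"
    using compl by (metis card_subset_eq finite_Diff finite_carrier)
qed

lemma index_two_normal:
  assumes M: "subgroup M G" and index: "order G = 2 * card M"
  shows "M \<lhd> G"
proof (rule normalI[OF M], intro ballI)
  fix x assume x: "x \<in> carrier G"
  show "M #> x = x <# M"
  proof (cases "x \<in> M")
    case True
    then show ?thesis using coset_join2 coset_join3 x M by simp
  next
    case False
    then show ?thesis using coset_eq_compl_if_index_two[OF M index x] by simp
  qed
qed

lemma prime_order_subgroup_subset_centralizer: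
  assumes "subgroup H G" "Factorial_Ring.prime (card H)"
  shows "H \<subseteq> centralizer G H"
proof -
  obtain x where x: "x \<in> H" "x \<noteq> \<one>" using prime_order_subgroup_nontrivial assms by blast
  then show ?thesis
    using generate_eq_prime_order_subgroup[OF assms x] generate_singleton_subset_centralizer
      subgroup.mem_carrier[OF assms(1)] by metis
qed

lemma prime_order_group_abelian:
  assumes "Factorial_Ring.prime (order G)"
  shows "comm_group G"
proof (rule group_comm_groupI)
  fix x y assume "x \<in> carrier G" "y \<in> carrier G"
  then show "x \<otimes> y = y \<otimes> x"
    using prime_order_subgroup_subset_centralizer[OF subgroup_self] assms centralizer_commute
    by (metis order_def subsetD)
qed

end

lemma (in comm_group) prime_dvd_max_ord:
  assumes fin: "finite (carrier G)" and g: "g \<in> carrier G"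
    and max: "\<And>x. x \<in> carrier G \<Longrightarrow> ord x \<le> ord g"
    and q: "Factorial_Ring.prime q" "q dvd order G"
  shows "q dvd ord g"
proof (rule ccontr)
  assume "\<not> q dvd ord g"
  interpret finite_group G by unfold_locales (rule fin)
  obtain Q where Q: "subgroup Q G" "card Q = q" using exists_subgroup_of_prime_order[OF q] .
  then have prime: "Factorial_Ring.prime (card Q)" using q(1) by simp
  then obtain y where y: "y \<in> Q" "y \<noteq> \<one>" using prime_order_subgroup_nontrivial[OF Q(1)] by blast
  have yc: "y \<in> carrier G" using subgroup.mem_carrier[OF Q(1) y(1)] .
  have "ord y = q" using ord_eq_card_prime_order_subgroup[OF Q(1) prime y] Q(2) by simp
  then have "ord (g \<otimes> y) = ord g * q"
    using ord_mult_coprime[OF g yc m_comm[OF g yc]] \<open>\<not> q dvd ord g\<close> q(1)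
    by (simp add: prime_imp_coprime coprime_commute)
  moreover have "ord g < ord g * q" using ord_ge_1[OF fin g] prime_gt_1_nat[OF q(1)] by simp
  ultimately show False using max[of "g \<otimes> y"] g yc by simp
qed

lemma (in comm_group) cyclic_if_squarefree_order:
  assumes fin: "finite (carrier G)" and sqf: "squarefree (order G)"
  shows "cyclic_group G"
proof -
  have finite: "finite (ord ` carrier G)" using fin by simp
  have "ord ` carrier G \<noteq> {}" using one_closed by blast
  then have "Max (ord ` carrier G) \<in> ord ` carrier G" by (rule Max_in[OF finite])
  then obtain g where g: "g \<in> carrier G" "ord g = Max (ord ` carrier G)" by (metis imageE)
  have max: "ord x \<le> ord g" if "x \<in> carrier G" for x
    using Max_ge[OF finite] that g(2) by simp
  have "ord g = order G"
  proof (rule ccontr)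
    assume "ord g \<noteq> order G"
    obtain k where k: "order G = ord g * k" using ord_dvd_group_order[OF g(1)] ..
    then have "k \<noteq> 1" using \<open>ord g \<noteq> order G\<close> by auto
    then obtain q where q: "Factorial_Ring.prime q" "q dvd k" using prime_factor_nat by blast
    then have "q dvd ord g" using prime_dvd_max_ord[OF fin g(1) max q(1)] k by simp
    then have "q^2 dvd order G" using k q(2) by (simp add: power2_eq_square mult_dvd_mono)
    then show False using squarefree_imp_not_prime_square_dvd[OF sqf q(1)] by simp
  qed
  then have "generate G {g} = carrier G"
    using card_subset_eq[OF fin generate_incl[of "{g}"]] g generate_pow_card[OF g(1)] by (simp add: order_def)
  then have "carrier G = {g [^] (k::int) | k. k \<in> UNIV}" using generate_pow[OF g(1)] by simp
  then have "carrier G = range (\<lambda>n::int. g [^] n)" by blast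
  then show ?thesis using cyclic_group g(1) by blast
qed

context finite_group
begin

lemma cyclic_group_abelian_subgroup_of_squarefree_order:
  assumes H: "subgroup H G" "H \<subseteq> centralizer G H" and sqf: "squarefree (card H)"
  shows "cyclic_group (G\<lparr>carrier := H\<rparr>)"
proof -
  interpret H: group "G\<lparr>carrier := H\<rparr>" using subgroup_imp_group[OF H(1)] .
  interpret H: comm_group "G\<lparr>carrier := H\<rparr>"
    by (rule H.group_comm_groupI) (use H(2) centralizer_commute in auto)
  show ?thesis using H.cyclic_if_squarefree_order finite_subgroup[OF H(1)] sqf by (simp add: order_def)
qed

end

section \<open>Counting subgroups of prime order\<close>

lemma (in group_action) card_orbit_eq_order:
  assumes prime: "Factorial_Ring.prime (order G)" and x: "x \<in> E"
    and not_fixed: "\<not> (\<forall>g \<in> carrier G. \<phi> g x = x)"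
  shows "card (orbit G \<phi> x) = order G"
proof -
  have "card (orbit G \<phi> x) * card (stabilizer G \<phi> x) = order G" using orbit_stabilizer_theorem[OF x] .
  then have "card (orbit G \<phi> x) dvd order G" by (metis dvd_triv_left)
  moreover have "card (orbit G \<phi> x) \<noteq> 1"
  proof
    assume "card (orbit G \<phi> x) = 1"
    moreover have "x \<in> orbit G \<phi> x" using orbit_refl[OF x] .
    ultimately have "orbit G \<phi> x = {x}" by (metis card_1_singletonE singletonD)
    then show False using not_fixed unfolding orbit_def by blast
  qed
  ultimately show ?thesis using prime_nat_dvdD[OF prime] by blast
qed

lemma (in group_action) card_invariant_subset_mod_prime_order:
  assumes prime: "Factorial_Ring.prime (order G)" and Y: "finite Y" "Y \<subseteq> E"
    and invariant: "\<And>g x. g \<in> carrier G \<Longrightarrow> x \<in> Y \<Longrightarrow> \<phi> g x \<in> Y"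
  shows "card Y mod order G = card {x \<in> Y. \<forall>g \<in> carrier G. \<phi> g x = x} mod order G"
proof -
  let ?F = "{x \<in> Y. \<forall>g \<in> carrier G. \<phi> g x = x}"
  let ?Z = "Y - ?F"
  have orbit_subset: "orbit G \<phi> x \<subseteq> ?Z" if x: "x \<in> ?Z" for x
  proof
    fix y assume y: "y \<in> orbit G \<phi> x"
    then have "y \<in> Y" using invariant x unfolding orbit_def by auto
    moreover have "y \<notin> ?F"
    proof
      assume "y \<in> ?F"
      have "x \<in> orbit G \<phi> y" using orbit_sym y x Y \<open>y \<in> Y\<close> by blast
      then have "x = y" using \<open>y \<in> ?F\<close> unfolding orbit_def by auto
      then show False using x \<open>y \<in> ?F\<close> by blast
    qed
    ultimately show "y \<in> ?Z" by blast
  qed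
  define r where "r = {(x, y). x \<in> ?Z \<and> y \<in> orbit G \<phi> x}"
  have "equiv ?Z r"
  proof (rule equivI)
    show "refl_on ?Z r" unfolding r_def refl_on_def using orbit_refl orbit_subset Y by blast
    show "sym r" unfolding r_def sym_def using orbit_sym orbit_subset Y by blast
    show "trans r" unfolding r_def trans_def using orbit_trans orbit_subset Y by blast
    show "r \<subseteq> ?Z \<times> ?Z" unfolding r_def using orbit_subset by blast
  qed
  then have dvd: "order G dvd card ?Z"
  proof (rule equiv_imp_dvd_card[rotated])
    show "finite ?Z" using Y by blast
    fix C assume "C \<in> ?Z // r"
    then obtain x where x: "x \<in> ?Z" and C: "C = orbit G \<phi> x"
      unfolding quotient_def r_def using orbit_subset by blast
    then have "card C = order G" using card_orbit_eq_order[OF prime] Y by blast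
    then show "order G dvd card C" by simp
  qed
  have "card Y = card (?Z \<union> ?F)" by (rule arg_cong[where f = card]) blast
  also have "\<dots> = card ?Z + card ?F" using Y(1) by (intro card_Un_disjoint) auto
  finally show ?thesis using dvd by (auto elim!: dvdE)
qed

definition subgroups_of_order :: "('a, 'b) monoid_scheme \<Rightarrow> nat \<Rightarrow> 'a set set" where
  "subgroups_of_order G n = {H. subgroup H G \<and> card H = n}"

definition subgroup_conj :: "('a, 'b) monoid_scheme \<Rightarrow> 'a \<Rightarrow> 'a set \<Rightarrow> 'a set" where
  "subgroup_conj G g = (\<lambda>H \<in> {H. subgroup H G}. g <#\<^bsub>G\<^esub> H #>\<^bsub>G\<^esub> inv\<^bsub>G\<^esub> g)"

context group
begin

lemma subgroup_conj_action: "group_action G {H. subgroup H G} (subgroup_conj G)"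
  unfolding subgroup_conj_def by (rule action_by_conjugation_on_subgroups_set)

lemma subgroup_conj_apply: "subgroup H G \<Longrightarrow> subgroup_conj G g H = g <# H #> inv g"
  unfolding subgroup_conj_def by simp

lemma conjugate_mem_subgroups_of_order:
  "H \<in> subgroups_of_order G n \<Longrightarrow> g \<in> carrier G \<Longrightarrow> g <# H #> inv g \<in> subgroups_of_order G n"
  unfolding subgroups_of_order_def
  using subgroup_conjugation_is_surj2 card_conjugate subgroup.subset by blast

lemma subgroup_conj_fixed_iff:
  assumes "subgroup H G" "g \<in> carrier G"
  shows "subgroup_conj G g H = H \<longleftrightarrow> g \<in> normalizer G H"
  using assms mem_normalizer_iff subgroup.subset subgroup_conj_apply by metis

end

context finite_group
begin

lemma finite_subgroups_of_order: "finite (subgroups_of_order G n)"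
  by (rule finite_subset[of _ "Pow (carrier G)"]) (auto simp: subgroups_of_order_def dest: subgroup.subset)

lemma prime_order_subgroup_eq_if_normalizes:
  assumes q: "Factorial_Ring.prime q" "\<not> q^2 dvd order G"
    and Q: "Q \<in> subgroups_of_order G q" and Q': "Q' \<in> subgroups_of_order G q"
    and normalizes: "Q \<subseteq> normalizer G Q'"
  shows "Q = Q'"
proof (rule ccontr)
  assume "Q \<noteq> Q'"
  have sub: "subgroup Q G" "subgroup Q' G" and card: "card Q = q" "card Q' = q"
    using Q Q' by (auto simp: subgroups_of_order_def)
  then have Int: "Q \<inter> Q' = {\<one>}" using prime_order_subgroups_Int[OF sub] \<open>Q \<noteq> Q'\<close> q by simp
  have "subgroup (Q <#> Q') G"
    using subgroup_set_mult[OF sub] normalizer_conj_closed[OF subgroup.subset[OF sub(2)]] normalizes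
    by blast
  then have "card (Q <#> Q') dvd order G" by (rule card_subgroup_dvd_order)
  moreover have "card (Q <#> Q') = q^2"
    using card_set_mult[OF sub Int] card by (simp add: power2_eq_square)
  ultimately show False using q by simp
qed

lemma card_conj_invariant_subgroups_mod:
  assumes q: "Factorial_Ring.prime q" "\<not> q^2 dvd order G"
    and Q: "Q \<in> subgroups_of_order G q" and Y: "Y \<subseteq> subgroups_of_order G q"
    and invariant: "\<And>g H. g \<in> Q \<Longrightarrow> H \<in> Y \<Longrightarrow> g <# H #> inv g \<in> Y"
  shows "card Y mod q = card (Y \<inter> {Q}) mod q"
proof -
  have sub: "subgroup Q G" and card: "card Q = q" using Q by (auto simp: subgroups_of_order_def)
  interpret A: group_action "G\<lparr>carrier := Q\<rparr>" "{H. subgroup H G}" "subgroup_conj G"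
    using group_action.induced_action[OF subgroup_conj_action sub] .
  have YE: "Y \<subseteq> {H. subgroup H G}" using Y by (auto simp: subgroups_of_order_def)
  have QG: "Q \<subseteq> carrier G" using sub subgroup.subset by blast
  have "(\<forall>g \<in> Q. subgroup_conj G g H = H) \<longleftrightarrow> Q \<subseteq> normalizer G H" if "H \<in> Y" for H
  proof -
    have H: "subgroup H G" using YE that by blast
    have "subgroup_conj G g H = H \<longleftrightarrow> g \<in> normalizer G H" if "g \<in> Q" for g
      using subgroup_conj_fixed_iff[OF H] QG that by blast
    then show ?thesis by blast
  qed
  then have "{H \<in> Y. \<forall>g \<in> Q. subgroup_conj G g H = H} = {H \<in> Y. Q \<subseteq> normalizer G H}" by blast
  also have "\<dots> = Y \<inter> {Q}"
    using prime_order_subgroup_eq_if_normalizes[OF q Q] subgroup_subset_normalizer[OF sub] Y by blast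
  finally have fixed: "{H \<in> Y. \<forall>g \<in> Q. subgroup_conj G g H = H} = Y \<inter> {Q}" .
  have prime: "Factorial_Ring.prime (order (G\<lparr>carrier := Q\<rparr>))" using card q(1) by (simp add: order_def)
  have "subgroup_conj G g H \<in> Y" if "g \<in> carrier (G\<lparr>carrier := Q\<rparr>)" "H \<in> Y" for g H
    using invariant[of g H] subgroup_conj_apply[of H g] YE that by auto
  from A.card_invariant_subset_mod_prime_order[OF prime finite_subset[OF Y finite_subgroups_of_order] YE this]
  have "card Y mod q = card {H \<in> Y. \<forall>g \<in> Q. subgroup_conj G g H = H} mod q"
    using card by (simp add: order_def)
  then show ?thesis using fixed by simp
qed

lemma subgroups_of_prime_order_eq_conjugates:
  assumes q: "Factorial_Ring.prime q" "\<not> q^2 dvd order G" and Q: "Q \<in> subgroups_of_order G q"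
  shows "subgroups_of_order G q = {g <# Q #> inv g | g. g \<in> carrier G}"
proof -
  let ?X = "subgroups_of_order G q"
  let ?O = "{g <# Q #> inv g | g. g \<in> carrier G}"
  have QG: "Q \<subseteq> carrier G" using Q subgroup.subset by (auto simp: subgroups_of_order_def)
  have OX: "?O \<subseteq> ?X" using conjugate_mem_subgroups_of_order Q by blast
  have QO: "Q \<in> ?O" using conjugate_one[OF QG] by force
  have O_invariant: "g <# H #> inv g \<in> ?O" if g: "g \<in> carrier G" and H: "H \<in> ?O" for g H
  proof -
    obtain h where h: "h \<in> carrier G" "H = h <# Q #> inv h" using H by blast
    then have "g <# H #> inv g = (g \<otimes> h) <# Q #> inv (g \<otimes> h)"
      using conjugate_conjugate g QG by simp
    then show ?thesis using h g by blast
  qed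
  have card_O: "card ?O mod q = card (?O \<inter> {H}) mod q" if "H \<in> ?X" for H
  proof (rule card_conj_invariant_subgroups_mod[OF q that OX])
    fix g K assume "g \<in> H" "K \<in> ?O"
    moreover have "subgroup H G" using \<open>H \<in> ?X\<close> by (simp add: subgroups_of_order_def)
    ultimately show "g <# K #> inv g \<in> ?O" by (intro O_invariant subgroup.mem_carrier)
  qed
  have "q > 1" using q prime_gt_1_nat by blast
  then have O_mod: "card ?O mod q = 1" using card_O[OF Q] QO by simp
  show "?X = ?O"
  proof
    show "?X \<subseteq> ?O"
    proof
      fix H assume "H \<in> ?X"
      then show "H \<in> ?O" using card_O[of H] O_mod by (cases "H \<in> ?O") auto
    qed
  qed (rule OX)
qed

lemma card_subgroups_of_prime_order:
  assumes q: "Factorial_Ring.prime q" "\<not> q^2 dvd order G" and Q: "Q \<in> subgroups_of_order G q"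
  shows "card (subgroups_of_order G q) mod q = 1"
    and "card (subgroups_of_order G q) * card (normalizer G Q) = order G"
proof -
  have sub: "subgroup Q G" using Q by (auto simp: subgroups_of_order_def)
  interpret A: group_action G "{H. subgroup H G}" "subgroup_conj G" by (rule subgroup_conj_action)
  have "card (subgroups_of_order G q) mod q = card (subgroups_of_order G q \<inter> {Q}) mod q"
    by (rule card_conj_invariant_subgroups_mod[OF q Q order_refl])
      (intro conjugate_mem_subgroups_of_order subgroup.mem_carrier[OF sub])
  then show "card (subgroups_of_order G q) mod q = 1"
    using Q prime_gt_1_nat[OF q(1)] by simp
  have X_eq: "subgroups_of_order G q = {g <# Q #> inv g | g. g \<in> carrier G}"
    using subgroups_of_prime_order_eq_conjugates[OF q Q] .
  have "orbit G (subgroup_conj G) Q = subgroups_of_order G q"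
    unfolding X_eq orbit_def using subgroup_conj_apply[OF sub] by auto
  moreover have "stabilizer G (subgroup_conj G) Q = normalizer G Q"
    unfolding stabilizer_def using subgroup_conj_fixed_iff[OF sub] normalizer_imp_subgroup[OF subgroup.subset[OF sub]]
      subgroup.subset by blast
  ultimately show "card (subgroups_of_order G q) * card (normalizer G Q) = order G"
    using A.orbit_stabilizer_theorem[of Q] sub by simp
qed

lemma card_subgroups_of_prime_order_dvd:
  assumes q: "Factorial_Ring.prime q" "\<not> q^2 dvd order G" and Q: "Q \<in> subgroups_of_order G q"
  shows "card (subgroups_of_order G q) dvd order G div q"
proof -
  have sub: "subgroup Q G" and card: "card Q = q" using Q by (auto simp: subgroups_of_order_def)
  have "q dvd card (normalizer G Q)"
    using card_subgroup_dvd_card[OF normalizer_imp_subgroup[OF subgroup.subset[OF sub]] sub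
        subgroup_subset_normalizer[OF sub]] card by simp
  then obtain k where "card (normalizer G Q) = q * k" ..
  then have "order G = q * (card (subgroups_of_order G q) * k)"
    using card_subgroups_of_prime_order(2)[OF q Q] by (simp add: algebra_simps)
  then have "order G div q = card (subgroups_of_order G q) * k"
    using prime_gt_0_nat[OF q(1)] by simp
  then show ?thesis by simp
qed

lemma card_subgroups_of_prime_order_mem:
  assumes q: "Factorial_Ring.prime q" "\<not> q^2 dvd order G" "q dvd order G"
  shows "card (subgroups_of_order G q) \<in> {d \<in> {1..order G div q}. d dvd order G div q \<and> d mod q = 1}"
proof -
  obtain Q where "Q \<in> subgroups_of_order G q"
    using exists_subgroup_of_prime_order[OF q(1,3)] by (auto simp: subgroups_of_order_def)
  moreover have "0 < order G div q" using q(1,3) prime_gt_0_nat order_gt_0_iff_finite finite_carrier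
    by (metis div_greater_zero_iff dvd_imp_le)
  ultimately show ?thesis
    using card_subgroups_of_prime_order_dvd[OF q(1,2)] card_subgroups_of_prime_order(1)[OF q(1,2)]
      mem_divisors_nat by blast
qed

lemma card_subgroups_of_prime_order_normalizer:
  assumes q: "Factorial_Ring.prime q" "\<not> q^2 dvd order G" and Q: "Q \<in> subgroups_of_order G q"
  shows "card (normalizer G Q) = order G div card (subgroups_of_order G q)"
proof -
  have "card (subgroups_of_order G q) > 0"
    using card_subgroups_of_prime_order(1)[OF q Q] by (intro Nat.gr0I) simp
  then show ?thesis using card_subgroups_of_prime_order(2)[OF q Q] by (metis nonzero_mult_div_cancel_left not_gr0)
qed

lemma normal_if_unique_subgroup_of_prime_order:
  assumes q: "Factorial_Ring.prime q" "\<not> q^2 dvd order G" and Q: "Q \<in> subgroups_of_order G q"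
    and unique: "card (subgroups_of_order G q) = 1"
  shows "Q \<lhd> G"
proof -
  have sub: "subgroup Q G" using Q by (auto simp: subgroups_of_order_def)
  have N: "subgroup (normalizer G Q) G" using normalizer_imp_subgroup[OF subgroup.subset[OF sub]] .
  have "card (normalizer G Q) = order G" using card_subgroups_of_prime_order(2)[OF q Q] unique by simp
  then have "normalizer G Q = carrier G"
    using card_subset_eq[OF finite_carrier subgroup.subset[OF N]] by (simp add: order_def)
  then show ?thesis using normal_iff_normalizer_eq[OF sub] by simp
qed

lemma card_Union_subgroups_of_prime_order:
  assumes q: "Factorial_Ring.prime q"
  shows "card (\<Union>H \<in> subgroups_of_order G q. H - {\<one>}) = card (subgroups_of_order G q) * (q - 1)"
proof -
  have "card (\<Union>H \<in> subgroups_of_order G q. H - {\<one>}) = (\<Sum>H \<in> subgroups_of_order G q. card (H - {\<one>}))"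
  proof (rule card_UN_disjoint[OF finite_subgroups_of_order])
    show "\<forall>H \<in> subgroups_of_order G q. finite (H - {\<one>})"
      using finite_subgroup by (auto simp: subgroups_of_order_def)
    show "\<forall>H \<in> subgroups_of_order G q. \<forall>K \<in> subgroups_of_order G q. H \<noteq> K \<longrightarrow> (H - {\<one>}) \<inter> (K - {\<one>}) = {}"
    proof (intro ballI impI)
      fix H K assume "H \<in> subgroups_of_order G q" "K \<in> subgroups_of_order G q" "H \<noteq> K"
      then have "H \<inter> K = {\<one>}" using prime_order_subgroups_Int q by (simp add: subgroups_of_order_def)
      then show "(H - {\<one>}) \<inter> (K - {\<one>}) = {}" by blast
    qed
  qed
  also have "\<dots> = (\<Sum>H \<in> subgroups_of_order G q. q - 1)"
  proof (rule sum.cong)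
    fix H assume "H \<in> subgroups_of_order G q"
    then have H: "subgroup H G" "card H = q" by (auto simp: subgroups_of_order_def)
    then show "card (H - {\<one>}) = q - 1"
      using finite_subgroup[OF H(1)] subgroup.one_closed[OF H(1)] by (simp add: card_Diff_singleton)
  qed simp
  finally show ?thesis by simp
qed

lemma card_subgroups_of_two_prime_orders_less:
  assumes q: "Factorial_Ring.prime q" and r: "Factorial_Ring.prime r" and "q \<noteq> r"
  shows "card (subgroups_of_order G q) * (q - 1) + card (subgroups_of_order G r) * (r - 1) < order G"
proof -
  let ?U = "\<lambda>q. \<Union>H \<in> subgroups_of_order G q. H - {\<one>}"
  have ord: "ord x = q" if "x \<in> ?U q" "Factorial_Ring.prime q" for x q
    using that ord_eq_card_prime_order_subgroup by (auto simp: subgroups_of_order_def)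
  have U: "?U q \<subseteq> carrier G - {\<one>}" for q
    using subgroup.subset by (auto simp: subgroups_of_order_def)
  have finite: "finite (?U q)" for q using finite_subset[OF U] by simp
  have "?U q \<inter> ?U r = {}" using ord q r \<open>q \<noteq> r\<close> by blast
  then have "card (?U q) + card (?U r) = card (?U q \<union> ?U r)"
    by (intro card_Un_disjoint[symmetric] finite)
  also have "\<dots> \<le> card (carrier G - {\<one>})" using U by (intro card_mono) auto
  also have "\<dots> < order G"
    using order_gt_0_iff_finite by (simp add: order_def card_Diff_singleton)
  finally show ?thesis using card_Union_subgroups_of_prime_order q r by simp
qed

lemma prime_product_order_subset_normalizer:
  assumes S: "subgroup S G" "card S = r * s"
    and primes: "Factorial_Ring.prime r" "Factorial_Ring.prime s" "r \<noteq> s" "s mod r \<noteq> 1"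
    and R: "subgroup R G" "R \<subseteq> S" "card R = r"
  shows "S \<subseteq> normalizer G R"
proof -
  interpret S: finite_group "G\<lparr>carrier := S\<rparr>" using finite_group_subgroup S(1) .
  have RS: "R \<in> subgroups_of_order (G\<lparr>carrier := S\<rparr>) r"
    using subgroup_incl[OF R(1) S(1) R(2)] R(3) by (simp add: subgroups_of_order_def)
  have order: "order (G\<lparr>carrier := S\<rparr>) = r * s" using S(2) by (simp add: order_def)
  have not_sq: "\<not> r^2 dvd order (G\<lparr>carrier := S\<rparr>)"
  proof
    assume "r^2 dvd order (G\<lparr>carrier := S\<rparr>)"
    then have "r dvd s" using order prime_gt_0_nat[OF primes(1)] by (simp add: power2_eq_square)
    then show False using primes prime_nat_dvdD[of s r] prime_gt_1_nat[of r] by auto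
  qed
  let ?n = "card (subgroups_of_order (G\<lparr>carrier := S\<rparr>) r)"
  have "?n dvd s"
    using S.card_subgroups_of_prime_order_dvd[OF primes(1) not_sq RS] order
      prime_gt_0_nat[OF primes(1)] by simp
  moreover have "?n mod r = 1" using S.card_subgroups_of_prime_order(1)[OF primes(1) not_sq RS] .
  ultimately have "?n = 1" using prime_nat_dvdD[OF primes(2)] primes(4) by auto
  then have normal: "R \<lhd> G\<lparr>carrier := S\<rparr>"
    using S.normal_if_unique_subgroup_of_prime_order[OF primes(1) not_sq RS] by simp
  show ?thesis
  proof
    fix x assume x: "x \<in> S"
    have "x \<otimes> y \<otimes> inv x \<in> R" if y: "y \<in> R" for y
      using normal.inv_op_closed2[OF normal, of x y] x y m_inv_consistent[OF S(1) x] by simp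
    then show "x \<in> normalizer G R"
      by (intro mem_normalizerI subgroup.subset[OF R(1)] subgroup.mem_carrier[OF S(1) x])
  qed
qed

lemma prime_product_order_subgroup_abelian:
  assumes S: "subgroup S G" "card S = r * s"
    and primes: "Factorial_Ring.prime r" "Factorial_Ring.prime s" "r \<noteq> s" "s mod r \<noteq> 1" "r mod s \<noteq> 1"
  shows "S \<subseteq> centralizer G S"
proof -
  obtain R where R: "subgroup R G" "R \<subseteq> S" "card R = r"
    using exists_subgroup_of_prime_order_in[OF S(1) primes(1)] S(2) by auto
  obtain T where T: "subgroup T G" "T \<subseteq> S" "card T = s"
    using exists_subgroup_of_prime_order_in[OF S(1) primes(2)] S(2) by auto
  have NR: "S \<subseteq> normalizer G R" using prime_product_order_subset_normalizer[OF S primes(1-4) R] .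
  have NT: "S \<subseteq> normalizer G T"
    using prime_product_order_subset_normalizer[OF S(1) _ primes(2,1) _ primes(5) T] S(2) primes(3)
    by (simp add: mult.commute)
  have Int: "R \<inter> T = {\<one>}" using prime_order_subgroups_Int[OF R(1) T(1)] R T primes by auto
  have commute: "R \<subseteq> centralizer G T"
  proof
    fix x assume x: "x \<in> R"
    have "x \<otimes> y = y \<otimes> x" if y: "y \<in> T" for y
    proof (rule commute_if_mutually_normalizing[OF R(1) T(1) Int x y])
      show "x \<otimes> y \<otimes> inv x \<in> T"
        using normalizer_conj_closed[OF subgroup.subset[OF T(1)]] NT R(2) x y by blast
      show "y \<otimes> inv x \<otimes> inv y \<in> R"
        using normalizer_conj_closed[OF subgroup.subset[OF R(1)]] NR T(2) x y
          subgroup.m_inv_closed[OF R(1)] by blast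
    qed
    then show "x \<in> centralizer G T" using x subgroup.mem_carrier[OF R(1)] unfolding centralizer_def by blast
  qed
  have "R <#> T = S"
  proof (rule card_subset_eq[OF finite_subgroup[OF S(1)]])
    show "R <#> T \<subseteq> S" using R T S(1) subgroup.m_closed unfolding set_mult_def by fastforce
    show "card (R <#> T) = card S" using card_set_mult[OF R(1) T(1) Int] R T S by simp
  qed
  moreover have "R <#> T \<subseteq> centralizer G (R <#> T)"
    using set_mult_subset_centralizer commute R T primes prime_order_subgroup_subset_centralizer by simp
  ultimately show ?thesis by simp
qed

(* For q exactly dividing the group order, order G div card (subgroups_of_order G q) is the order
   of the normalizer of any subgroup of order q. *)
lemma prime_mult_dvd_order_div_card_subgroups:
  assumes r: "Factorial_Ring.prime r" "\<not> r^2 dvd order G"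
    and s: "Factorial_Ring.prime s" "\<not> s^2 dvd order G" "s dvd order G" "r \<noteq> s" "s mod r \<noteq> 1"
    and dvd: "r dvd order G div card (subgroups_of_order G s)"
  shows "r * s dvd order G div card (subgroups_of_order G r)"
proof -
  obtain Q where Q: "subgroup Q G" "card Q = s" using exists_subgroup_of_prime_order[OF s(1,3)] .
  then have QG: "Q \<subseteq> carrier G" using subgroup.subset by blast
  have "r dvd card (normalizer G Q)"
    using dvd card_subgroups_of_prime_order_normalizer[OF s(1,2)] Q by (simp add: subgroups_of_order_def)
  then obtain R where R: "subgroup R G" "R \<subseteq> normalizer G Q" "card R = r"
    using exists_subgroup_of_prime_order_in[OF normalizer_imp_subgroup[OF QG] r(1)] by blast
  have S: "subgroup (R <#> Q) G"
    using subgroup_set_mult[OF R(1) Q(1)] normalizer_conj_closed[OF QG] R(2) by blast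
  have "R \<inter> Q = {\<one>}" using prime_order_subgroups_Int[OF R(1) Q(1)] R(3) Q(2) r s by auto
  then have card: "card (R <#> Q) = r * s" using card_set_mult[OF R(1) Q(1)] R(3) Q(2) by simp
  have "R \<subseteq> R <#> Q"
  proof
    fix x assume "x \<in> R"
    then have "x = x \<otimes> \<one>" "\<one> \<in> Q" using subgroup.mem_carrier[OF R(1)] subgroup.one_closed[OF Q(1)] by auto
    then show "x \<in> R <#> Q" using \<open>x \<in> R\<close> unfolding set_mult_def by blast
  qed
  then have "R <#> Q \<subseteq> normalizer G R"
    using prime_product_order_subset_normalizer[OF S card r(1) s(1,4,5) R(1) _ R(3)] by blast
  then have "r * s dvd card (normalizer G R)"
    using card_subgroup_dvd_card[OF normalizer_imp_subgroup[OF subgroup.subset[OF R(1)]] S] card by simp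
  then show ?thesis
    using card_subgroups_of_prime_order_normalizer[OF r] R by (simp add: subgroups_of_order_def)
qed

end

section \<open>Commutators\<close>

context group
begin

lemma inv_commutator:
  "x \<in> carrier G \<Longrightarrow> y \<in> carrier G \<Longrightarrow> inv (x \<otimes> y \<otimes> inv x \<otimes> inv y) = y \<otimes> x \<otimes> inv y \<otimes> inv x"
  by (simp add: m_assoc inv_mult_group)

lemma conjugation_on_cyclic_normal_is_power:
  assumes a: "a \<in> carrier G" and normal: "generate G {a} \<lhd> G" and g: "g \<in> carrier G"
  obtains r :: int where "\<And>y. y \<in> generate G {a} \<Longrightarrow> g \<otimes> y \<otimes> inv g = y [^] r"
proof -
  have "g \<otimes> a \<otimes> inv g \<in> generate G {a}"
    using normal_inv_iff normal g generate.incl[of a "{a}" G] by blast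
  then obtain r :: int where r: "g \<otimes> a \<otimes> inv g = a [^] r" using generate_pow[OF a] by blast
  have "g \<otimes> y \<otimes> inv g = y [^] r" if "y \<in> generate G {a}" for y
  proof -
    obtain k :: int where k: "y = a [^] k" using \<open>y \<in> generate G {a}\<close> generate_pow[OF a] by blast
    have "g \<otimes> y \<otimes> inv g = (a [^] r) [^] k" using conjugate_int_pow[OF g a] k r by simp
    also have "\<dots> = y [^] r" using a k by (simp add: int_pow_pow mult.commute)
    finally show ?thesis .
  qed
  then show ?thesis using that by blast
qed

lemma conjugations_commute_on_cyclic_normal:
  assumes a: "a \<in> carrier G" and normal: "generate G {a} \<lhd> G"
    and g: "g \<in> carrier G" and h: "h \<in> carrier G" and y: "y \<in> generate G {a}"
  shows "g \<otimes> (h \<otimes> y \<otimes> inv h) \<otimes> inv g = h \<otimes> (g \<otimes> y \<otimes> inv g) \<otimes> inv h"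
proof -
  obtain r :: int where r: "\<And>y. y \<in> generate G {a} \<Longrightarrow> g \<otimes> y \<otimes> inv g = y [^] r"
    using conjugation_on_cyclic_normal_is_power[OF a normal g] by blast
  obtain s :: int where s: "\<And>y. y \<in> generate G {a} \<Longrightarrow> h \<otimes> y \<otimes> inv h = y [^] s"
    using conjugation_on_cyclic_normal_is_power[OF a normal h] by blast
  have closed: "y [^] k \<in> generate G {a}" for k :: int
    using subgroup_int_pow_closed[OF generate_is_subgroup y] a by simp
  have yc: "y \<in> carrier G" using y generate_incl a by blast
  have "g \<otimes> (h \<otimes> y \<otimes> inv h) \<otimes> inv g = (y [^] s) [^] r" using r s y closed by simp
  also have "\<dots> = (y [^] r) [^] s" using yc by (simp add: int_pow_pow mult.commute)
  also have "\<dots> = h \<otimes> (g \<otimes> y \<otimes> inv g) \<otimes> inv h" using r s y closed by simp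
  finally show ?thesis .
qed

lemma derived_subset_centralizer_cyclic_normal:
  assumes a: "a \<in> carrier G" and normal: "generate G {a} \<lhd> G"
  shows "derived G (carrier G) \<subseteq> centralizer G (generate G {a})"
  unfolding derived_def
proof (rule generate_subgroup_incl[OF _ subgroup_centralizer])
  show P: "generate G {a} \<subseteq> carrier G" using generate_incl a by blast
  show "derived_set G (carrier G) \<subseteq> centralizer G (generate G {a})"
  proof
    fix c assume "c \<in> derived_set G (carrier G)"
    then obtain g h where gh: "g \<in> carrier G" "h \<in> carrier G" "c = g \<otimes> h \<otimes> inv g \<otimes> inv h" by blast
    have "c \<otimes> y = y \<otimes> c" if y: "y \<in> generate G {a}" for y
    proof -
      have yc: "y \<in> carrier G" using y P by blast
      have "c \<otimes> y \<otimes> inv c = g \<otimes> h \<otimes> (inv g \<otimes> (inv h \<otimes> y \<otimes> inv (inv h)) \<otimes> inv (inv g)) \<otimes> inv h \<otimes> inv g"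
        using gh yc by (simp add: m_assoc inv_mult_group)
      also have "\<dots> = g \<otimes> h \<otimes> (inv h \<otimes> (inv g \<otimes> y \<otimes> inv (inv g)) \<otimes> inv (inv h)) \<otimes> inv h \<otimes> inv g"
        using conjugations_commute_on_cyclic_normal[OF a normal, of "inv g" "inv h" y] gh y by simp
      also have "\<dots> = y" using gh yc by (simp add: m_assoc)
      finally show ?thesis using gh yc by (metis inv_solve_right' m_closed inv_closed)
    qed
    then show "c \<in> centralizer G (generate G {a})" using gh unfolding centralizer_def by simp
  qed
qed

lemma derived_subset_if_generators_commute_mod:
  assumes N: "N \<lhd> G" and S: "S \<subseteq> carrier G" "generate G S = carrier G"
    and commute: "\<And>x y. x \<in> S \<Longrightarrow> y \<in> S \<Longrightarrow> x \<otimes> y \<otimes> inv x \<otimes> inv y \<in> N"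
  shows "derived G (carrier G) \<subseteq> N"
proof (rule derived_minimal[OF N])
  interpret N: normal N G by fact
  interpret Q: group "G Mod N" by (rule N.factorgroup_is_group)
  interpret h: group_hom G "G Mod N" "\<lambda>x. N #> x"
    by unfold_locales (rule N.r_coset_hom_Mod)
  have "(N #> x) \<otimes>\<^bsub>G Mod N\<^esub> (N #> y) = (N #> y) \<otimes>\<^bsub>G Mod N\<^esub> (N #> x)"
    if "x \<in> S" "y \<in> S" for x y
  proof -
    have c: "x \<in> carrier G" "y \<in> carrier G" using that S by auto
    have xy: "x \<otimes> y \<in> carrier G" and yx: "y \<otimes> x \<in> carrier G" using c by auto
    have "x \<otimes> y \<otimes> inv (y \<otimes> x) \<in> N" using commute[OF that] c by (simp add: inv_mult_group m_assoc)
    then have "x \<otimes> y \<in> N #> (y \<otimes> x)" by (rule N.rcos_module_rev[OF is_group yx xy])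
    then have "N #> (y \<otimes> x) = N #> (x \<otimes> y)" by (rule repr_independence[OF _ yx N.subgroup_axioms])
    then show ?thesis using h.hom_mult c by metis
  qed
  moreover have image: "(\<lambda>x. N #> x) ` S \<subseteq> carrier (G Mod N)" using S(1) h.hom_closed by blast
  ultimately have "(\<lambda>x. N #> x) ` S \<subseteq> centralizer (G Mod N) ((\<lambda>x. N #> x) ` S)"
    unfolding centralizer_def by auto
  moreover have "generate (G Mod N) ((\<lambda>x. N #> x) ` S) = carrier (G Mod N)"
    using h.generate_img[OF S(1)] S(2) carrier_FactGroup[of G N] by simp
  ultimately have "carrier (G Mod N) \<subseteq> centralizer (G Mod N) (carrier (G Mod N))"
    using Q.generate_subset_centralizer[OF image] by simp
  then show "comm_group (G Mod N)"
    by (intro Q.group_comm_groupI) (auto simp: centralizer_def)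
qed

lemma normal_image_int_pow:
  fixes k :: int
  assumes N: "N \<lhd> G" "N \<subseteq> centralizer G N"
  shows "(\<lambda>x. x [^] k) ` N \<lhd> G"
proof -
  interpret N: normal N G by fact
  let ?K = "(\<lambda>x. x [^] k) ` N"
  have K: "subgroup ?K G"
  proof (rule subgroupI)
    show "?K \<subseteq> carrier G" using N.subset by auto
    show "?K \<noteq> {}" using N.one_closed by blast
  next
    fix y assume "y \<in> ?K"
    then obtain x where "x \<in> N" "y = x [^] k" by blast
    then show "inv y \<in> ?K" by (metis N.m_inv_closed N.mem_carrier image_eqI int_pow_inv)
  next
    fix y z assume "y \<in> ?K" "z \<in> ?K"
    then obtain x x' where x: "x \<in> N" "y = x [^] k" and x': "x' \<in> N" "z = x' [^] k" by blast
    have "x \<otimes> x' = x' \<otimes> x" using centralizer_commute N(2) x(1) x'(1) by blast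
    then have "y \<otimes> z = (x \<otimes> x') [^] k" using int_pow_mult_distrib x x' by simp
    then show "y \<otimes> z \<in> ?K" using x(1) x'(1) by blast
  qed
  show ?thesis
  proof (rule normal_invI[OF K])
    fix g y assume g: "g \<in> carrier G" and "y \<in> ?K"
    then obtain x where x: "x \<in> N" "y = x [^] k" by blast
    then have "g \<otimes> y \<otimes> inv g = (g \<otimes> x \<otimes> inv g) [^] k" using conjugate_int_pow g by simp
    then show "g \<otimes> y \<otimes> inv g \<in> ?K" using N.inv_op_closed2 g x by blast
  qed
qed

lemma generate_insert_inv_eq_carrier:
  assumes N: "N \<subseteq> carrier G" and b: "b \<in> carrier G" "generate G {b} <#> N = carrier G"
  shows "generate G (insert (inv b) N) = carrier G"
proof
  have S: "insert (inv b) N \<subseteq> carrier G" using b N by simp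
  let ?H = "generate G (insert (inv b) N)"
  show "?H \<subseteq> carrier G" using generate_incl[OF S] .
  have "inv (inv b) \<in> ?H" by (rule generate_m_inv_closed[OF S generate.incl]) simp
  then have gen_b: "generate G {b} \<subseteq> ?H"
    using b(1) by (intro generate_subgroup_incl generate_is_subgroup[OF S]) simp
  have gen_N: "N \<subseteq> ?H" by (auto intro: generate.incl)
  show "carrier G \<subseteq> ?H"
  proof
    fix u assume "u \<in> carrier G"
    then obtain h d where "h \<in> generate G {b}" "d \<in> N" "u = h \<otimes> d"
      using b(2) unfolding set_mult_def by blast
    then show "u \<in> ?H" using gen_b gen_N subgroup.m_closed[OF generate_is_subgroup[OF S]] by blast
  qed
qed

lemma derived_subset_image_power:
  fixes \<tau> :: int
  assumes N: "N \<lhd> G" "N \<subseteq> centralizer G N"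
    and b: "b \<in> carrier G" "generate G {b} <#> N = carrier G"
    and tau: "\<And>x. x \<in> N \<Longrightarrow> inv b \<otimes> x \<otimes> b = x [^] \<tau>"
  shows "derived G (carrier G) \<subseteq> (\<lambda>x. x [^] (\<tau> - 1)) ` N"
proof (rule derived_subset_if_generators_commute_mod[OF normal_image_int_pow[OF N]])
  interpret N: normal N G by fact
  let ?K = "(\<lambda>x. x [^] (\<tau> - 1)) ` N"
  have K: "subgroup ?K G" using normal_imp_subgroup[OF normal_image_int_pow[OF N]] .
  show "insert (inv b) N \<subseteq> carrier G" using b N.subset by simp
  show "generate G (insert (inv b) N) = carrier G" using generate_insert_inv_eq_carrier[OF N.subset b] .
  \<comment> \<open>the commutator of \<open>inv b\<close> and \<open>x\<close> is \<open>x [^] (\<tau> - 1)\<close>\<close>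
  have power: "inv b \<otimes> x \<otimes> inv (inv b) \<otimes> inv x \<in> ?K" if "x \<in> N" for x
  proof -
    have "inv b \<otimes> x \<otimes> inv (inv b) \<otimes> inv x = x [^] \<tau> \<otimes> inv (x [^] (1::int))" using tau that b by simp
    then show ?thesis using int_pow_diff that by auto
  qed
  fix x y assume "x \<in> insert (inv b) N" "y \<in> insert (inv b) N"
  then consider "x = inv b" "y = inv b" | "x = inv b" "y \<in> N" | "x \<in> N" "y = inv b" | "x \<in> N" "y \<in> N"
    by blast
  then show "x \<otimes> y \<otimes> inv x \<otimes> inv y \<in> ?K"
  proof cases
    case 1
    then show ?thesis using b subgroup.one_closed[OF K] by (simp add: m_assoc)
  next
    case 2
    then show ?thesis using power by simp
  next
    case 3
    then have "x \<otimes> y \<otimes> inv x \<otimes> inv y = inv (inv b \<otimes> x \<otimes> inv (inv b) \<otimes> inv x)"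
      using inv_commutator[of "inv b" x] b N.mem_carrier by simp
    then show ?thesis using power[of x] 3 subgroup.m_inv_closed[OF K] by simp
  next
    case 4
    then have "x \<otimes> y = y \<otimes> x" using N(2) centralizer_commute by blast
    then show ?thesis using 4 subgroup.one_closed[OF K] by (simp add: m_assoc)
  qed
qed

lemma gcd_eq_1_if_generate_subset_image_power:
  fixes k :: int
  assumes a: "a \<in> carrier G" and surj: "generate G {a} \<subseteq> (\<lambda>x. x [^] k) ` generate G {a}"
  shows "gcd k (int (ord a)) = 1"
proof -
  obtain x where x: "x \<in> generate G {a}" "a = x [^] k"
    using surj generate.incl[of a "{a}" G] by blast
  then obtain j :: int where j: "x = a [^] j" using generate_pow[OF a] by blast
  have "a = (a [^] j) [^] k" using x(2) unfolding j .
  then have "a [^] (1::int) = a [^] (j * k)" using a by (simp add: int_pow_pow)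
  then have "int (ord a) dvd j * k - 1" using int_pow_eq[OF a] by blast
  then have "gcd k (int (ord a)) dvd j * k - 1" by (rule dvd_trans[OF gcd_dvd2])
  moreover have "gcd k (int (ord a)) dvd j * k" by simp
  ultimately have "gcd k (int (ord a)) dvd j * k - (j * k - 1)" by (rule dvd_diff[rotated])
  then show ?thesis by simp
qed

lemma derived_subset_set_mult_if_derived_quotient_cyclic:
  assumes N: "N \<lhd> G" and x: "x \<in> carrier G"
    and quotient: "derived (G Mod N) (carrier (G Mod N)) \<subseteq> generate (G Mod N) {N #> x}"
  shows "derived G (carrier G) \<subseteq> N <#> generate G {x}"
proof
  interpret N: normal N G by fact
  interpret Q: group "G Mod N" by (rule N.factorgroup_is_group)
  interpret h: group_hom G "G Mod N" "\<lambda>x. N #> x"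
    by unfold_locales (rule N.r_coset_hom_Mod)
  fix d assume d: "d \<in> derived G (carrier G)"
  have dc: "d \<in> carrier G" using d derived_in_carrier[OF subset_refl] by blast
  have "derived (G Mod N) (carrier (G Mod N)) = (\<lambda>x. N #> x) ` derived G (carrier G)"
    using h.derived_img[of "carrier G"] carrier_FactGroup[of G N] by simp
  then have "N #> d \<in> generate (G Mod N) {N #> x}" using d quotient by blast
  then obtain i :: int where "N #> d = (N #> x) [^]\<^bsub>G Mod N\<^esub> i"
    unfolding Q.generate_pow[OF h.hom_closed[OF x]] by blast
  also have "\<dots> = N #> (x [^] i)" using h.hom_int_pow[OF x] by simp
  finally have "d \<in> N #> (x [^] i)" using rcos_self[OF dc N.subgroup_axioms] by simp
  moreover have "x [^] i \<in> generate G {x}" using generate_pow[OF x] by blast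
  ultimately show "d \<in> N <#> generate G {x}" unfolding r_coset_def set_mult_def by blast
qed

lemma derived_abelian_if_cyclic_normal_and_quotient:
  assumes a: "a \<in> carrier G" and normal: "generate G {a} \<lhd> G" and x: "x \<in> carrier G"
    and quotient: "derived (G Mod generate G {a}) (carrier (G Mod generate G {a}))
                    \<subseteq> generate (G Mod generate G {a}) {generate G {a} #> x}"
  shows "derived G (carrier G) \<subseteq> centralizer G (derived G (carrier G))"
proof -
  let ?P = "generate G {a}" and ?D = "derived G (carrier G)"
  let ?C = "centralizer G ?P"
  let ?B = "?C \<inter> generate G {x}"
  have P: "?P \<subseteq> carrier G" using generate_incl a by simp
  have C: "subgroup ?C G" using subgroup_centralizer[OF P] .
  have DC: "?D \<subseteq> ?C" using derived_subset_centralizer_cyclic_normal[OF a normal] .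
  have PC: "?P \<subseteq> ?C" using generate_singleton_subset_centralizer[OF a] .
  \<comment> \<open>modulo \<open>P\<close> an element of \<open>G'\<close> is a power of \<open>x\<close>, which then lies in \<open>C(P)\<close> as \<open>P\<close> and \<open>G'\<close> do\<close>
  have "?D \<subseteq> ?P <#> ?B"
  proof
    fix d assume d: "d \<in> ?D"
    then obtain p y where py: "p \<in> ?P" "y \<in> generate G {x}" "d = p \<otimes> y"
      using derived_subset_set_mult_if_derived_quotient_cyclic[OF normal x quotient]
      unfolding set_mult_def by blast
    have "y = inv p \<otimes> d" using py P generate_incl[of "{x}"] x by (auto simp: subset_iff)
    also have "\<dots> \<in> ?C" using subgroup.m_closed[OF C subgroup.m_inv_closed[OF C]] PC DC py(1) d by blast
    finally show "d \<in> ?P <#> ?B" using py unfolding set_mult_def by blast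
  qed
  moreover have "?P <#> ?B \<subseteq> centralizer G (?P <#> ?B)"
  proof (rule set_mult_subset_centralizer)
    show "?P \<subseteq> centralizer G ?P" using PC .
    show "?B \<subseteq> centralizer G ?B"
      using generate_singleton_subset_centralizer[OF x] centralizer_antimono[of ?B "generate G {x}"] by blast
    show "?P \<subseteq> centralizer G ?B"
      by (rule subset_centralizer_sym) (use P in \<open>auto simp: centralizer_def\<close>)
  qed
  ultimately show ?thesis using centralizer_antimono by blast
qed

end

context finite_group
begin

lemma subgroup_Int_centralizer_eq_one:
  fixes \<tau> :: int
  assumes N: "subgroup N G" and b: "b \<in> carrier G"
    and tau: "\<And>x. x \<in> N \<Longrightarrow> inv b \<otimes> x \<otimes> b = x [^] \<tau>"
    and coprime: "gcd (\<tau> - 1) (int (card N)) = 1"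
  shows "N \<inter> centralizer G {b} = {\<one>}"
proof -
  have "z = \<one>" if z: "z \<in> N" "z \<in> centralizer G {b}" for z
  proof -
    have zc: "z \<in> carrier G" using subgroup.mem_carrier[OF N z(1)] .
    have "z \<otimes> b = b \<otimes> z" using centralizer_commute[OF z(2)] by simp
    then have "z [^] \<tau> = z [^] (1::int)" using tau[OF z(1)] b zc by (simp add: m_assoc)
    then have "int (ord z) dvd \<tau> - 1" using int_pow_eq[OF zc] by (metis dvd_minus_iff minus_diff_eq)
    moreover have "int (ord z) dvd int (card N)" using ord_dvd_card_subgroup[OF N z(1)] by simp
    ultimately have "int (ord z) dvd 1" using coprime by (metis gcd_greatest)
    then show ?thesis using ord_eq_1[OF zc] by simp
  qed
  moreover have "\<one> \<in> centralizer G {b}" using b unfolding centralizer_def by simp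
  ultimately show ?thesis using subgroup.one_closed[OF N] by blast
qed

lemma exists_ord_eq_order_cyclic_quotient:
  assumes N: "N \<lhd> G" and cyclic: "cyclic_group (G Mod N)"
  obtains b where "b \<in> carrier G" "ord b = order (G Mod N)"
proof -
  interpret N: normal N G by fact
  interpret Q: group "G Mod N" by (rule N.factorgroup_is_group)
  interpret h: group_hom G "G Mod N" "\<lambda>x. N #> x"
    by unfold_locales (rule N.r_coset_hom_Mod)
  obtain c where c: "c \<in> carrier (G Mod N)" "carrier (G Mod N) = range (\<lambda>i::int. c [^]\<^bsub>G Mod N\<^esub> i)"
    using Q.cyclic_group cyclic by blast
  then have "generate (G Mod N) {c} = carrier (G Mod N)" using Q.generate_pow[OF c(1)] by auto
  then have ord_c: "Q.ord c = order (G Mod N)" using Q.generate_pow_card[OF c(1)] by (simp add: order_def)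
  obtain g where g: "g \<in> carrier G" "c = N #> g" using c(1) unfolding carrier_FactGroup by blast
  have "c [^]\<^bsub>G Mod N\<^esub> ord g = N #> (g [^] ord g)" using h.hom_nat_pow[OF g(1)] g(2) by simp
  also have "\<dots> = \<one>\<^bsub>G Mod N\<^esub>" using g by simp
  finally have "order (G Mod N) dvd ord g" using Q.pow_eq_id[OF c(1)] ord_c by simp
  then obtain t where t: "ord g = order (G Mod N) * t" ..
  have ord_g: "ord g > 0" using ord_ge_1[OF finite_carrier g(1)] by simp
  then have "t \<noteq> 0" using t by auto
  then have "ord (g [^] t) = order (G Mod N)" using ord_pow[OF g(1), of t] t ord_g by simp
  then show ?thesis using that g(1) by blast
qed

lemma complement_if_coprime_card:
  assumes H: "subgroup H G" and N: "N \<lhd> G"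
    and coprime: "coprime (card H) (card N)" and card: "card H * card N = order G"
  shows "H \<inter> N = {\<one>}" "H <#> N = carrier G"
proof -
  interpret N: normal N G by fact
  show Int: "H \<inter> N = {\<one>}"
  proof
    show "H \<inter> N \<subseteq> {\<one>}"
    proof
      fix x assume x: "x \<in> H \<inter> N"
      have "ord x dvd card H" "ord x dvd card N"
        using ord_dvd_card_subgroup[OF H] ord_dvd_card_subgroup[OF N.subgroup_axioms] x by auto
      then have "ord x = 1" using coprime by (metis coprime_common_divisor_nat)
      then show "x \<in> {\<one>}" using ord_eq_1 x N.mem_carrier by blast
    qed
    show "{\<one>} \<subseteq> H \<inter> N" using H N.one_closed subgroup.one_closed by blast
  qed
  have "subgroup (H <#> N) G"
    using subgroup_set_mult[OF H N.subgroup_axioms] N.inv_op_closed2 subgroup.mem_carrier[OF H] by blast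
  moreover have "card (H <#> N) = order G" using card_set_mult[OF H N.subgroup_axioms Int] card by simp
  ultimately show "H <#> N = carrier G"
    using card_subset_eq[OF finite_carrier subgroup.subset] by (simp add: order_def)
qed

lemma exists_cyclic_complement:
  assumes N: "N \<lhd> G" and comm: "comm_group (G Mod N)" and sqf: "squarefree (order G)"
  obtains b where "b \<in> carrier G" "generate G {b} \<inter> N = {\<one>}" "generate G {b} <#> N = carrier G"
proof -
  have order: "order (G Mod N) * card N = order G"
    using lagrange[OF normal_imp_subgroup[OF N]] by (simp add: order_def FactGroup_def)
  have "cyclic_group (G Mod N)"
  proof (rule comm_group.cyclic_if_squarefree_order[OF comm])
    show "finite (carrier (G Mod N))" by (simp add: carrier_FactGroup)
    show "squarefree (order (G Mod N))" using squarefree_mono[OF _ sqf] order by (metis dvd_triv_left)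
  qed
  then obtain b where b: "b \<in> carrier G" "ord b = order (G Mod N)"
    using exists_ord_eq_order_cyclic_quotient[OF N] by blast
  then have "card (generate G {b}) = order (G Mod N)" using generate_pow_card by simp
  moreover have "coprime (order (G Mod N)) (card N)" using squarefree_mult_imp_coprime sqf order by simp
  ultimately show ?thesis
    using that b(1) complement_if_coprime_card[OF generate_is_subgroup N] order by simp
qed

end

section \<open>Groups of squarefree order with abelian derived subgroup\<close>

context finite_group
begin

lemma cyclic_group_derived:
  assumes sqf: "squarefree (order G)"
    and abelian: "derived G (carrier G) \<subseteq> centralizer G (derived G (carrier G))"
  shows "cyclic_group (G\<lparr>carrier := derived G (carrier G)\<rparr>)"
proof (rule cyclic_group_abelian_subgroup_of_squarefree_order[OF derived_is_subgroup[OF subset_refl] abelian])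
  show "squarefree (card (derived G (carrier G)))"
    using squarefree_mono[OF card_subgroup_dvd_order[OF derived_is_subgroup[OF subset_refl]] sqf] .
qed

lemma gcd_conjugation_exponent_derived:
  fixes \<tau> :: int
  assumes sqf: "squarefree (order G)"
    and abelian: "derived G (carrier G) \<subseteq> centralizer G (derived G (carrier G))"
    and b: "cyclic_complement_gen G (derived G (carrier G)) b"
    and tau: "\<And>x. x \<in> derived G (carrier G) \<Longrightarrow> inv b \<otimes> x \<otimes> b = x [^] \<tau>"
  shows "gcd (\<tau> - 1) (int (card (derived G (carrier G)))) = 1"
proof -
  let ?D = "derived G (carrier G)"
  have D: "subgroup ?D G" using derived_is_subgroup[OF subset_refl] .
  obtain a where a: "a \<in> ?D" "generate G {a} = ?D"
    using cyclic_subgroup_generator[OF D cyclic_group_derived[OF sqf abelian]] .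
  have "?D \<subseteq> (\<lambda>x. x [^] (\<tau> - 1)) ` ?D"
    using derived_subset_image_power[OF derived_self_is_normal abelian] b tau
    by (auto simp: cyclic_complement_gen_def)
  then show ?thesis
    using gcd_eq_1_if_generate_subset_image_power[of a "\<tau> - 1"] a generate_pow_card subgroup.mem_carrier[OF D]
    by metis
qed

lemma exists_cyclic_complement_derived:
  assumes sqf: "squarefree (order G)"
  obtains b where "cyclic_complement_gen G (derived G (carrier G)) b"
  using exists_cyclic_complement[OF derived_self_is_normal derived_quot_is_comm_group sqf]
  unfolding cyclic_complement_gen_def by metis

lemma derived_Int_center_eq_one:
  assumes sqf: "squarefree (order G)"
    and abelian: "derived G (carrier G) \<subseteq> centralizer G (derived G (carrier G))"
  shows "derived G (carrier G) \<inter> group_center G = {\<one>}"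
proof -
  let ?D = "derived G (carrier G)"
  have D: "subgroup ?D G" using derived_is_subgroup[OF subset_refl] .
  obtain a where a: "a \<in> ?D" "generate G {a} = ?D"
    using cyclic_subgroup_generator[OF D cyclic_group_derived[OF sqf abelian]] .
  obtain b where b: "cyclic_complement_gen G ?D b" using exists_cyclic_complement_derived[OF sqf] .
  then have bc: "b \<in> carrier G" by (simp add: cyclic_complement_gen_def)
  obtain \<tau> :: int where "\<And>x. x \<in> ?D \<Longrightarrow> inv b \<otimes> x \<otimes> inv (inv b) = x [^] \<tau>"
    using conjugation_on_cyclic_normal_is_power[of a "inv b"] a derived_self_is_normal bc
      subgroup.mem_carrier[OF D] by (metis inv_closed)
  then have tau: "\<And>x. x \<in> ?D \<Longrightarrow> inv b \<otimes> x \<otimes> b = x [^] \<tau>" using bc by simp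
  have "?D \<inter> centralizer G {b} = {\<one>}"
    using subgroup_Int_centralizer_eq_one[OF D bc tau gcd_conjugation_exponent_derived[OF sqf abelian b tau]] .
  moreover have "group_center G \<subseteq> centralizer G {b}"
    unfolding group_center_eq_centralizer by (rule centralizer_antimono) (simp add: bc)
  moreover have "\<one> \<in> group_center G" unfolding group_center_def by simp
  ultimately show ?thesis using subgroup.one_closed[OF D] by blast
qed

end

section \<open>Groups of order 30p\<close>

context finite_group
begin

lemma card_subgroups_of_order_7_ne_15:
  assumes order: "order G = 210"
  shows "card (subgroups_of_order G 7) \<noteq> 15"
proof
  assume n7: "card (subgroups_of_order G 7) = 15"
  \<comment> \<open>then the normalizers of the subgroups of order 7 have order 14, so none of them normalizes a
    subgroup of order 3 or 5; this forces 21 subgroups of order 5 and 70 of order 3, too many elements\<close>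
  have not_sq: "\<not> q^2 dvd order G" if "Factorial_Ring.prime q" for q
    using squarefree_30_mult_prime[of 7] order squarefree_imp_not_prime_square_dvd[OF _ that] by simp
  have primes: "Factorial_Ring.prime (3::nat)" "Factorial_Ring.prime (5::nat)" "Factorial_Ring.prime (7::nat)"
    by simp_all
  have no_7: "\<not> 7 dvd 210 div card (subgroups_of_order G s)" if "s = 3 \<or> s = 5" for s
    using prime_mult_dvd_order_div_card_subgroups[OF primes(3) not_sq[OF primes(3)], of s] that order n7 primes not_sq
    by auto
  have "card (subgroups_of_order G 5) \<in> {d \<in> {1..42}. d dvd 42 \<and> d mod 5 = 1}"
    using card_subgroups_of_prime_order_mem[OF primes(2) not_sq[OF primes(2)]] order by simp
  also have "\<dots> = {1, 6, 21}" by code_simp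
  finally have n5: "card (subgroups_of_order G 5) = 21" using no_7[of 5] by auto
  have no_5: "\<not> 5 dvd 210 div card (subgroups_of_order G 3)"
    using prime_mult_dvd_order_div_card_subgroups[OF primes(2) not_sq[OF primes(2)] primes(1) not_sq[OF primes(1)]]
      order n5 by auto
  have "card (subgroups_of_order G 3) \<in> {d \<in> {1..70}. d dvd 70 \<and> d mod 3 = 1}"
    using card_subgroups_of_prime_order_mem[OF primes(1) not_sq[OF primes(1)]] order by simp
  also have "\<dots> = {1, 7, 10, 70}" by code_simp
  finally have "card (subgroups_of_order G 3) = 70" using no_7[of 3] no_5 by auto
  then show False using card_subgroups_of_two_prime_orders_less[OF primes(2,1)] n5 order by simp
qed

lemma card_subgroups_of_order_29_ne_30:
  assumes order: "order G = 870"
  shows "card (subgroups_of_order G 29) \<noteq> 30"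
proof
  assume n29: "card (subgroups_of_order G 29) = 30"
  have primes: "Factorial_Ring.prime (5::nat)" "Factorial_Ring.prime (29::nat)" by code_simp+
  have not_sq: "\<not> q^2 dvd order G" if "Factorial_Ring.prime q" for q
    using squarefree_30_mult_prime[OF primes(2)] order squarefree_imp_not_prime_square_dvd[OF _ that] by simp
  have "card (subgroups_of_order G 5) \<in> {d \<in> {1..174}. d dvd 174 \<and> d mod 5 = 1}"
    using card_subgroups_of_prime_order_mem[OF primes(1) not_sq[OF primes(1)]] order by simp
  also have "\<dots> = {1, 6}" by code_simp
  finally have "29 dvd 870 div card (subgroups_of_order G 5)" by auto
  then show False
    using prime_mult_dvd_order_div_card_subgroups[OF primes(2) not_sq[OF primes(2)] primes(1) not_sq[OF primes(1)]]
      order n29 by simp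
qed

lemma normal_subgroup_of_prime_order_30p:
  assumes p: "Factorial_Ring.prime p" "7 \<le> p" and order: "order G = 30 * p"
  obtains P where "P \<in> subgroups_of_order G p" "P \<lhd> G"
proof -
  have not_sq: "\<not> p^2 dvd order G"
    using squarefree_imp_not_prime_square_dvd[OF squarefree_30_mult_prime[OF p] p(1)] order by simp
  obtain P where P: "P \<in> subgroups_of_order G p"
    using exists_subgroup_of_prime_order[OF p(1)] order by (auto simp: subgroups_of_order_def)
  have "card (subgroups_of_order G p) dvd 30"
    using card_subgroups_of_prime_order_dvd[OF p(1) not_sq P] order prime_gt_0_nat[OF p(1)] by simp
  then have "card (subgroups_of_order G p) = 1"
    using dvd_30_mod_prime_eq_1_cases[OF _ card_subgroups_of_prime_order(1)[OF p(1) not_sq P] p] order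
      card_subgroups_of_order_7_ne_15 card_subgroups_of_order_29_ne_30 by auto
  then show ?thesis using that P normal_if_unique_subgroup_of_prime_order[OF p(1) not_sq P] by blast
qed

lemma exists_subgroup_of_order_15:
  assumes order: "order G = 30"
  obtains M where "subgroup M G" "card M = 15"
proof -
  have primes: "Factorial_Ring.prime (3::nat)" "Factorial_Ring.prime (5::nat)" by simp_all
  have not_sq: "\<not> q^2 dvd order G" if "Factorial_Ring.prime q" for q
    using squarefree_30 order squarefree_imp_not_prime_square_dvd[OF _ that] by simp
  obtain Q3 where Q3: "subgroup Q3 G" "card Q3 = 3" using exists_subgroup_of_prime_order[OF primes(1)] order by auto
  obtain Q5 where Q5: "subgroup Q5 G" "card Q5 = 5" using exists_subgroup_of_prime_order[OF primes(2)] order by auto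
  have "Q3 \<noteq> Q5" using Q3 Q5 by auto
  then have Int: "Q3 \<inter> Q5 = {\<one>}" using prime_order_subgroups_Int[OF Q3(1) Q5(1)] Q3 Q5 primes by simp
  have "card (subgroups_of_order G 3) \<in> {d \<in> {1..10}. d dvd 10 \<and> d mod 3 = 1}"
    using card_subgroups_of_prime_order_mem[OF primes(1) not_sq[OF primes(1)]] order by simp
  also have "\<dots> = {1, 10}" by code_simp
  finally have n3: "card (subgroups_of_order G 3) \<in> {1, 10}" .
  have "card (subgroups_of_order G 5) \<in> {d \<in> {1..6}. d dvd 6 \<and> d mod 5 = 1}"
    using card_subgroups_of_prime_order_mem[OF primes(2) not_sq[OF primes(2)]] order by simp
  also have "\<dots> = {1, 6}" by code_simp
  finally have "card (subgroups_of_order G 3) = 1 \<or> card (subgroups_of_order G 5) = 1"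
    using n3 card_subgroups_of_two_prime_orders_less[OF primes] order by auto
  then have "Q3 \<lhd> G \<or> Q5 \<lhd> G"
    using normal_if_unique_subgroup_of_prime_order[OF primes(1) not_sq[OF primes(1)]]
      normal_if_unique_subgroup_of_prime_order[OF primes(2) not_sq[OF primes(2)]] Q3 Q5
    by (auto simp: subgroups_of_order_def)
  then have "subgroup (Q3 <#> Q5) G"
  proof
    assume normal: "Q3 \<lhd> G"
    then have "subgroup (Q5 <#> Q3) G"
      by (intro subgroup_set_mult[OF Q5(1) Q3(1)] normal.inv_op_closed2 subgroup.mem_carrier[OF Q5(1)])
    then show ?thesis using commut_normal[OF Q5(1) normal] by simp
  next
    assume "Q5 \<lhd> G"
    then show ?thesis
      by (intro subgroup_set_mult[OF Q3(1) Q5(1)] normal.inv_op_closed2 subgroup.mem_carrier[OF Q3(1)])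
  qed
  moreover have "card (Q3 <#> Q5) = 15" using card_set_mult[OF Q3(1) Q5(1) Int] Q3 Q5 by simp
  ultimately show ?thesis using that by blast
qed

lemma order_30_derived_subset_cyclic:
  assumes order: "order G = 30"
  obtains c where "c \<in> carrier G" "derived G (carrier G) \<subseteq> generate G {c}"
proof -
  obtain M where M: "subgroup M G" "card M = 15" using exists_subgroup_of_order_15[OF order] .
  have normal: "M \<lhd> G" using index_two_normal[OF M(1)] M(2) order by simp
  interpret Q: finite_group "G Mod M"
    using normal.factorgroup_is_group[OF normal]
    by (simp add: finite_group_def finite_group_axioms_def carrier_FactGroup)
  have "order (G Mod M) = 2" using lagrange[OF M(1)] M(2) order by (simp add: order_def FactGroup_def)
  then have "comm_group (G Mod M)" using Q.prime_order_group_abelian by simp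
  then have derived: "derived G (carrier G) \<subseteq> M" using derived_minimal[OF normal] by blast
  have "M \<subseteq> centralizer G M" using prime_product_order_subgroup_abelian[of M 3 5] M by simp
  moreover have "squarefree (card M)" using squarefree_mono[OF _ squarefree_30] M(2) by simp
  ultimately obtain c where "c \<in> M" "generate G {c} = M"
    using cyclic_subgroup_generator[OF M(1) cyclic_group_abelian_subgroup_of_squarefree_order[OF M(1)]]
    by blast
  then show ?thesis using that derived subgroup.mem_carrier[OF M(1)] by blast
qed

lemma derived_abelian_of_order_30p:
  assumes p: "Factorial_Ring.prime p" "7 \<le> p" and order: "order G = 30 * p"
  shows "derived G (carrier G) \<subseteq> centralizer G (derived G (carrier G))"
proof -
  obtain P where P: "P \<in> subgroups_of_order G p" "P \<lhd> G"
    using normal_subgroup_of_prime_order_30p[OF p order] .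
  then have P': "subgroup P G" "Factorial_Ring.prime (card P)" using p by (auto simp: subgroups_of_order_def)
  obtain a where a: "a \<in> P" "a \<noteq> \<one>" using prime_order_subgroup_nontrivial[OF P'] .
  have gen: "generate G {a} = P" using generate_eq_prime_order_subgroup[OF P' a] .
  interpret Q: finite_group "G Mod P"
    using normal.factorgroup_is_group[OF P(2)]
    by (simp add: finite_group_def finite_group_axioms_def carrier_FactGroup)
  have "order (G Mod P) = 30"
    using lagrange[OF P'(1)] P(1) order prime_gt_0_nat[OF p(1)]
    by (simp add: order_def FactGroup_def subgroups_of_order_def)
  then obtain c where c: "c \<in> carrier (G Mod P)" "derived (G Mod P) (carrier (G Mod P)) \<subseteq> generate (G Mod P) {c}"
    using Q.order_30_derived_subset_cyclic by blast
  then obtain x where "x \<in> carrier G" "c = P #> x" unfolding carrier_FactGroup by blast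
  then show ?thesis
    using derived_abelian_if_cyclic_normal_and_quotient[of a x] c gen P(2) subgroup.mem_carrier[OF P'(1) a(1)]
    by simp
qed

end

theorem lemma2p10:
  fixes G :: "('a, 'b) monoid_scheme" and p :: nat
  assumes "group G" and "finite (carrier G)"
    and "Factorial_Ring.prime p" and "p \<ge> 7"
    and "order G = 30 * p"
  shows "cyclic_group (subgroup_generated G (derived G (carrier G)))
    \<and> derived G (carrier G) \<inter> group_center G = {\<one>\<^bsub>G\<^esub>}
    \<and> (\<exists>n::nat. n > 0 \<and> (\<exists>b. cyclic_complement_gen G (derived G (carrier G)) b
            \<and> group.ord G b = n))
    \<and> (\<forall>b. cyclic_complement_gen G (derived G (carrier G)) b \<longrightarrow>
         (\<forall>\<tau>::int. (\<forall>x \<in> derived G (carrier G).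
               inv\<^bsub>G\<^esub> b \<otimes>\<^bsub>G\<^esub> x \<otimes>\<^bsub>G\<^esub> b = x [^]\<^bsub>G\<^esub> \<tau>)
            \<longrightarrow> gcd (\<tau> - 1) (int (card (derived G (carrier G)))) = 1))"
proof -
  interpret finite_group G using assms(1,2) by (simp add: finite_group_def finite_group_axioms_def)
  let ?D = "derived G (carrier G)"
  have sqf: "squarefree (order G)" using squarefree_30_mult_prime[OF assms(3,4)] assms(5) by simp
  have abelian: "?D \<subseteq> centralizer G ?D" using derived_abelian_of_order_30p[OF assms(3-5)] .
  obtain b where b: "cyclic_complement_gen G ?D b" using exists_cyclic_complement_derived[OF sqf] .
  then have "b \<in> carrier G" by (simp add: cyclic_complement_gen_def)
  then have "group.ord G b > 0" using ord_ge_1[OF finite_carrier] by fastforce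
  moreover have "subgroup_generated G ?D = G\<lparr>carrier := ?D\<rparr>"
    using subgroup.carrier_subgroup_generated_subgroup[OF derived_is_subgroup[OF subset_refl]]
    unfolding subgroup_generated_def by simp
  ultimately show ?thesis
    using cyclic_group_derived[OF sqf abelian] derived_Int_center_eq_one[OF sqf abelian]
      gcd_conjugation_exponent_derived[OF sqf abelian] b by auto
qed

end
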